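(* Let $\mathbb{k}$ be any field and $\mathfrak{h}$ a right Leibniz algebra over $\mathbb{k}$ of finite dimension $n$ with ordered basis $\mathbf{b}=(y_1,\ldots,y_n)$ and structure constants $C^i_{jk}$ given by $[y_j,y_k]=\sum_iC^i_{jk}y_i$. Let $\mathcal{G}^i_j,\bar{\mathcal{G}}^i_j$ be the generators of $\mathcal{O}(\mathrm{Aut}(\mathfrak{h}))$ relative to $\mathbf{b}$, and let $\tilde y$ denote the image of $y\in\mathfrak{h}$ in $\mathfrak{h}_{Lie}$. Then there exists a unique Hopf pairing $\langle-,-\rangle\colon U(\mathfrak{h}_{Lie})\otimes\mathcal{O}(\mathrm{Aut}(\mathfrak{h}))\to\mathbb{k}$ such that $\langle\tilde y_k,\mathcal{G}^i_j\rangle=-C^i_{jk}$ for all $i,j,k\in\{1,\ldots,n\}$. This Hopf pairing does not depend on the choice of basis $\mathbf{b}$.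
   Context: A right Leibniz algebra is a vector space $\mathfrak{h}$ with a bilinear bracket satisfying $[[x,y],z]=[[x,z],y]+[x,[y,z]]$. $\mathfrak{h}_{Lie}$ is the quotient of $\mathfrak{h}$ by the two-sided ideal generated by all $[x,x]$; $U(\mathfrak{h}_{Lie})$ is its universal enveloping algebra with its standard Hopf algebra structure. $\mathcal{O}(\mathrm{Aut}(\mathfrak{h}))$ is the coordinate Hopf algebra of the affine algebraic group of automorphisms of $\mathfrak{h}$; relative to $\mathbf{b}$ it is the commutative algebra generated by $\mathcal{G}^i_j,\bar{\mathcal{G}}^i_j$ ($\mathcal{G}^i_j$ gives the $(i,j)$ matrix entry of an automorphism $\psi$ in basis $\mathbf{b}$, $\psi(y_j)=\sum_i\mathcal{G}^i_j(\psi)y_i$; $\bar{\mathcal{G}}^i_j$ that of $\psi^{-1}$) with relations $\sum_{l,m}C^k_{lm}\mathcal{G}^l_i\mathcal{G}^m_j=\sum_r\mathcal{G}^k_rC^r_{ij}$, $\sum_k\mathcal{G}^i_k\bar{\mathcal{G}}^k_j=\delta^i_j=\sum_k\bar{\mathcal{G}}^i_k\mathcal{G}^k_j$, and Hopf structure $\Delta(\mathcal{G}^i_j)=\sum_k\mathcal{G}^i_k\otimes\mathcal{G}^k_j$, $\Delta(\bar{\mathcal{G}}^i_j)=\sum_k\bar{\mathcal{G}}^k_j\otimes\bar{\mathcal{G}}^i_k$, $\epsilon(\mathcal{G}^i_j)=\epsilon(\bar{\mathcal{G}}^i_j)=\delta^i_j$, $S(\mathcal{G}^i_j)=\bar{\mathcal{G}}^i_j$,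 $S(\bar{\mathcal{G}}^i_j)=\mathcal{G}^i_j$. A Hopf pairing $B\otimes H\to\mathbb{k}$ of bialgebras is a bilinear form (not required nondegenerate) with $\langle\Delta_B(b),h\otimes k\rangle=\langle b,hk\rangle$, $\langle b,1\rangle=\epsilon_B(b)$, $\langle b\otimes c,\Delta_H(h)\rangle=\langle bc,h\rangle$, $\langle 1,h\rangle=\epsilon_H(h)$, with componentwise pairing of tensor products. *)

theory Defs
  imports Main "HOL-Library.Poly_Mapping" "HOL-Library.Product_Plus"
begin

text \<open>The Leibniz algebra h has basis y_0,...,y_(n-1) (indices shifted to start at 0).
  Vectors of h are coordinate functions nat => 'k (only coordinates < n matter).
  C i j k is the structure constant C^i_jk, i.e. [y_j, y_k] = sum_i C i j k y_i.\<close>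

definition brk :: "nat \<Rightarrow> (nat \<Rightarrow> nat \<Rightarrow> nat \<Rightarrow> 'k::field) \<Rightarrow> (nat \<Rightarrow> 'k) \<Rightarrow> (nat \<Rightarrow> 'k) \<Rightarrow> (nat \<Rightarrow> 'k)"
  where "brk n C x y = (\<lambda>i. if i < n then (\<Sum>j<n. \<Sum>k<n. x j * y k * C i j k) else 0)"

definition right_leibniz :: "nat \<Rightarrow> (nat \<Rightarrow> nat \<Rightarrow> nat \<Rightarrow> 'k::field) \<Rightarrow> bool" where
  "right_leibniz n C \<longleftrightarrow>
     (\<forall>x y z i. brk n C (brk n C x y) z i = brk n C (brk n C x z) y i + brk n C x (brk n C y z) i)"

text \<open>The two-sided ideal of h generated by all squares [x,x] (its quotient is h_Lie).\<close>
inductive_set leib_ideal :: "nat \<Rightarrow> (nat \<Rightarrow> nat \<Rightarrow> nat \<Rightarrow> 'k::field) \<Rightarrow> (nat \<Rightarrow> 'k) set"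
  for n C where
  sq: "brk n C x x \<in> leib_ideal n C"
| zero: "(\<lambda>_. 0) \<in> leib_ideal n C"
| add: "v \<in> leib_ideal n C \<Longrightarrow> w \<in> leib_ideal n C \<Longrightarrow> (\<lambda>i. v i + w i) \<in> leib_ideal n C"
| smult: "v \<in> leib_ideal n C \<Longrightarrow> (\<lambda>i. c * v i) \<in> leib_ideal n C"
| brk_left: "v \<in> leib_ideal n C \<Longrightarrow> brk n C x v \<in> leib_ideal n C"
| brk_right: "v \<in> leib_ideal n C \<Longrightarrow> brk n C v x \<in> leib_ideal n C"

text \<open>Elements of the tensor algebra T(h) = free associative algebra on y_0..y_(n-1):
  finitely supported linear combinations of words (letter k stands for y_k).\<close>
type_synonym 'k tens = "nat list \<Rightarrow>\<^sub>0 'k"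

definition tens_carrier :: "nat \<Rightarrow> 'k::field tens set" where
  "tens_carrier n = {u. \<forall>w \<in> Poly_Mapping.keys u. set w \<subseteq> {..<n}}"

definition tword :: "nat list \<Rightarrow> 'k::field tens" where
  "tword w = Poly_Mapping.single w 1"

definition tone :: "'k::field tens" where "tone = tword []"

definition tmul :: "'k::field tens \<Rightarrow> 'k tens \<Rightarrow> 'k tens" where
  "tmul u v = (\<Sum>a\<in>Poly_Mapping.keys u. \<Sum>b\<in>Poly_Mapping.keys v. Poly_Mapping.single (a @ b) (Poly_Mapping.lookup u a * Poly_Mapping.lookup v b))"

definition tsmult :: "'k::field \<Rightarrow> 'k tens \<Rightarrow> 'k tens" where
  "tsmult c u = Poly_Mapping.map (\<lambda>x. c * x) u"

definition tlin :: "nat \<Rightarrow> (nat \<Rightarrow> 'k::field) \<Rightarrow> 'k tens" where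
  "tlin n v = (\<Sum>i<n. Poly_Mapping.single [i] (v i))"

inductive_set tideal :: "nat \<Rightarrow> 'k::field tens set \<Rightarrow> 'k tens set" for n S where
  zero: "0 \<in> tideal n S"
| gen: "s \<in> S \<Longrightarrow> a \<in> tens_carrier n \<Longrightarrow> b \<in> tens_carrier n \<Longrightarrow> tmul (tmul a s) b \<in> tideal n S"
| add: "u \<in> tideal n S \<Longrightarrow> v \<in> tideal n S \<Longrightarrow> u + v \<in> tideal n S"

text \<open>U(h_Lie) = T(h) / IU, where IU is generated by the (images of the) elements of
  the ideal leib_ideal (so that T(h)/(leib_ideal) = T(h_Lie)) and by
  y_a y_b - y_b y_a - [y_a,y_b].\<close>
definition U_rel :: "nat \<Rightarrow> (nat \<Rightarrow> nat \<Rightarrow> nat \<Rightarrow> 'k::field) \<Rightarrow> 'k tens set" where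
  "U_rel n C =
     {tword [a, b] - tword [b, a] - tlin n (\<lambda>i. C i a b) | a b. a < n \<and> b < n}
     \<union> tlin n ` leib_ideal n C"

definition U_ideal :: "nat \<Rightarrow> (nat \<Rightarrow> nat \<Rightarrow> nat \<Rightarrow> 'k::field) \<Rightarrow> 'k tens set" where
  "U_ideal n C = tideal n (U_rel n C)"

definition epsU :: "'k::field tens \<Rightarrow> 'k" where "epsU u = Poly_Mapping.lookup u []"

datatype gvar = Gv nat nat | Gbv nat nat

fun gidx_ok :: "nat \<Rightarrow> gvar \<Rightarrow> bool" where
  "gidx_ok n (Gv i j) = (i < n \<and> j < n)"
| "gidx_ok n (Gbv i j) = (i < n \<and> j < n)"

type_synonym 'k coord = "(gvar \<Rightarrow>\<^sub>0 nat) \<Rightarrow>\<^sub>0 'k"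

definition coord_carrier :: "nat \<Rightarrow> 'k::field coord set" where
  "coord_carrier n = {f. \<forall>m \<in> Poly_Mapping.keys f. \<forall>x \<in> Poly_Mapping.keys m. gidx_ok n x}"

definition cvar :: "gvar \<Rightarrow> 'k::field coord" where
  "cvar x = Poly_Mapping.single (Poly_Mapping.single x 1) 1"

definition cconst :: "'k::field \<Rightarrow> 'k coord" where
  "cconst c = Poly_Mapping.single 0 c"

definition csmult :: "'k::field \<Rightarrow> 'k coord \<Rightarrow> 'k coord" where
  "csmult c f = Poly_Mapping.map (\<lambda>x. c * x) f"

inductive_set cideal :: "nat \<Rightarrow> 'k::field coord set \<Rightarrow> 'k coord set" for n S where
  zero: "0 \<in> cideal n S"
| gen: "s \<in> S \<Longrightarrow> a \<in> coord_carrier n \<Longrightarrow> a * s \<in> cideal n S"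
| add: "f \<in> cideal n S \<Longrightarrow> g \<in> cideal n S \<Longrightarrow> f + g \<in> cideal n S"

definition O_rel :: "nat \<Rightarrow> (nat \<Rightarrow> nat \<Rightarrow> nat \<Rightarrow> 'k::field) \<Rightarrow> 'k coord set" where
  "O_rel n C =
     {(\<Sum>l<n. \<Sum>m<n. cconst (C k l m) * cvar (Gv l i) * cvar (Gv m j))
        - (\<Sum>r<n. cvar (Gv k r) * cconst (C r i j)) | i j k. i < n \<and> j < n \<and> k < n}
   \<union> {(\<Sum>k<n. cvar (Gv i k) * cvar (Gbv k j)) - cconst (if i = j then 1 else 0) | i j. i < n \<and> j < n}
   \<union> {(\<Sum>k<n. cvar (Gbv i k) * cvar (Gv k j)) - cconst (if i = j then 1 else 0) | i j. i < n \<and> j < n}"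

definition O_ideal :: "nat \<Rightarrow> (nat \<Rightarrow> nat \<Rightarrow> nat \<Rightarrow> 'k::field) \<Rightarrow> 'k coord set" where
  "O_ideal n C = cideal n (O_rel n C)"

definition psubst :: "('k \<Rightarrow> 'r::comm_ring_1) \<Rightarrow> ('v \<Rightarrow> 'r) \<Rightarrow> (('v \<Rightarrow>\<^sub>0 nat) \<Rightarrow>\<^sub>0 'k::field) \<Rightarrow> 'r" where
  "psubst emb \<sigma> f = (\<Sum>m\<in>Poly_Mapping.keys f. emb (Poly_Mapping.lookup f m) * (\<Prod>x\<in>Poly_Mapping.keys m. \<sigma> x ^ Poly_Mapping.lookup m x))"

text \<open>O(Aut h) tensor O(Aut h) is represented by polynomials in two copies of the variables;
  a monomial is a pair (left monomial, right monomial).\<close>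
type_synonym 'k coord2 = "((gvar \<Rightarrow>\<^sub>0 nat) \<times> (gvar \<Rightarrow>\<^sub>0 nat)) \<Rightarrow>\<^sub>0 'k"

definition cvarL :: "gvar \<Rightarrow> 'k::field coord2" where
  "cvarL x = Poly_Mapping.single (Poly_Mapping.single x 1, 0) 1"
definition cvarR :: "gvar \<Rightarrow> 'k::field coord2" where
  "cvarR x = Poly_Mapping.single (0, Poly_Mapping.single x 1) 1"

fun DeltaO_var :: "nat \<Rightarrow> gvar \<Rightarrow> 'k::field coord2" where
  "DeltaO_var n (Gv i j) = (\<Sum>k<n. cvarL (Gv i k) * cvarR (Gv k j))"
| "DeltaO_var n (Gbv i j) = (\<Sum>k<n. cvarL (Gbv k j) * cvarR (Gbv i k))"

definition DeltaO :: "nat \<Rightarrow> 'k::field coord \<Rightarrow> 'k coord2" where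
  "DeltaO n f = psubst (\<lambda>c. Poly_Mapping.single 0 c) (DeltaO_var n) f"

fun epsO_var :: "gvar \<Rightarrow> 'k::field" where
  "epsO_var (Gv i j) = (if i = j then 1 else 0)"
| "epsO_var (Gbv i j) = (if i = j then 1 else 0)"

definition epsO :: "'k::field coord \<Rightarrow> 'k" where
  "epsO f = psubst id epsO_var f"

text \<open>Pairing of Delta_U(u) (shuffle coproduct, y |-> y(x)1 + 1(x)y) with f (x) g.\<close>
definition pair_DeltaU :: "('k::field tens \<Rightarrow> 'k coord \<Rightarrow> 'k) \<Rightarrow> 'k tens \<Rightarrow> 'k coord \<Rightarrow> 'k coord \<Rightarrow> 'k" where
  "pair_DeltaU P u f g =
     (\<Sum>w\<in>Poly_Mapping.keys u. Poly_Mapping.lookup u w *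
        (\<Sum>S\<in>Pow {..<length w}. P (tword (nths w S)) f * P (tword (nths w ({..<length w} - S))) g))"

definition pair_tensor :: "('k::field tens \<Rightarrow> 'k coord \<Rightarrow> 'k) \<Rightarrow> 'k tens \<Rightarrow> 'k tens \<Rightarrow> 'k coord2 \<Rightarrow> 'k" where
  "pair_tensor P u v F =
     (\<Sum>m\<in>Poly_Mapping.keys F. Poly_Mapping.lookup F m * P u (Poly_Mapping.single (fst m) 1) * P v (Poly_Mapping.single (snd m) 1))"

text \<open>P is (a representative of) a Hopf pairing U(h_Lie) (x) O(Aut h) -> k:
  P is bilinear, vanishes when either argument lies in the defining ideal (so it descends
  to a bilinear form on the quotient algebras), and satisfies the Hopf pairing axioms.\<close>
definition hopf_pairing :: "nat \<Rightarrow> (nat \<Rightarrow> nat \<Rightarrow> nat \<Rightarrow> 'k::field) \<Rightarrow> ('k tens \<Rightarrow> 'k coord \<Rightarrow> 'k) \<Rightarrow> bool" where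
  "hopf_pairing n C P \<longleftrightarrow>
     (\<forall>u\<in>tens_carrier n. \<forall>v\<in>tens_carrier n. \<forall>f\<in>coord_carrier n. P (u + v) f = P u f + P v f) \<and>
     (\<forall>u\<in>tens_carrier n. \<forall>f\<in>coord_carrier n. \<forall>c. P (tsmult c u) f = c * P u f) \<and>
     (\<forall>u\<in>tens_carrier n. \<forall>f\<in>coord_carrier n. \<forall>g\<in>coord_carrier n. P u (f + g) = P u f + P u g) \<and>
     (\<forall>u\<in>tens_carrier n. \<forall>f\<in>coord_carrier n. \<forall>c. P u (csmult c f) = c * P u f) \<and>
     (\<forall>u\<in>U_ideal n C. \<forall>f\<in>coord_carrier n. P u f = 0) \<and>
     (\<forall>u\<in>tens_carrier n. \<forall>f\<in>O_ideal n C. P u f = 0) \<and>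
     (\<forall>u\<in>tens_carrier n. \<forall>f\<in>coord_carrier n. \<forall>g\<in>coord_carrier n.
         pair_DeltaU P u f g = P u (f * g)) \<and>
     (\<forall>u\<in>tens_carrier n. P u 1 = epsU u) \<and>
     (\<forall>u\<in>tens_carrier n. \<forall>v\<in>tens_carrier n. \<forall>f\<in>coord_carrier n.
         pair_tensor P u v (DeltaO n f) = P (tmul u v) f) \<and>
     (\<forall>f\<in>coord_carrier n. P tone f = epsO f)"

definition pairing_normalized :: "nat \<Rightarrow> (nat \<Rightarrow> nat \<Rightarrow> nat \<Rightarrow> 'k::field) \<Rightarrow> ('k tens \<Rightarrow> 'k coord \<Rightarrow> 'k) \<Rightarrow> bool" where
  "pairing_normalized n C P \<longleftrightarrow>
     (\<forall>i<n. \<forall>j<n. \<forall>k<n. P (tword [k]) (cvar (Gv i j)) = - C i j k)"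

text \<open>New basis y'_j = sum_i Q i j y_i, with Qi the inverse matrix of Q.\<close>
definition inverse_mats :: "nat \<Rightarrow> (nat \<Rightarrow> nat \<Rightarrow> 'k::field) \<Rightarrow> (nat \<Rightarrow> nat \<Rightarrow> 'k) \<Rightarrow> bool" where
  "inverse_mats n Q Qi \<longleftrightarrow>
     (\<forall>i<n. \<forall>j<n. (\<Sum>k<n. Q i k * Qi k j) = (if i = j then 1 else 0)) \<and>
     (\<forall>i<n. \<forall>j<n. (\<Sum>k<n. Qi i k * Q k j) = (if i = j then 1 else 0))"

definition basis_change_C :: "nat \<Rightarrow> (nat \<Rightarrow> nat \<Rightarrow> 'k::field) \<Rightarrow> (nat \<Rightarrow> nat \<Rightarrow> 'k) \<Rightarrow>
    (nat \<Rightarrow> nat \<Rightarrow> nat \<Rightarrow> 'k) \<Rightarrow> (nat \<Rightarrow> nat \<Rightarrow> nat \<Rightarrow> 'k)" where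
  "basis_change_C n Q Qi C = (\<lambda>i j k.
     \<Sum>a<n. \<Sum>c<n. \<Sum>l<n. Qi i a * C a c l * Q c j * Q l k)"

text \<open>The algebra isomorphism T(h) w.r.t. b' -> T(h) w.r.t. b, y'_j |-> sum_i Q i j y_i
  (both are T(h); it is the identity of T(h) in intrinsic terms).\<close>
definition tlist_prod :: "'k::field tens list \<Rightarrow> 'k tens" where
  "tlist_prod xs = foldr tmul xs tone"

definition tens_change :: "nat \<Rightarrow> (nat \<Rightarrow> nat \<Rightarrow> 'k::field) \<Rightarrow> 'k tens \<Rightarrow> 'k tens" where
  "tens_change n Q u =
     (\<Sum>w\<in>Poly_Mapping.keys u. tsmult (Poly_Mapping.lookup u w) (tlist_prod (map (\<lambda>j. tlin n (\<lambda>i. Q i j)) w)))"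

text \<open>The canonical identification O(Aut h) w.r.t. b' -> O(Aut h) w.r.t. b: the matrix
  of psi in basis b' is Q^-1 (matrix in b) Q, likewise for psi^-1.\<close>
fun coord_change_var :: "nat \<Rightarrow> (nat \<Rightarrow> nat \<Rightarrow> 'k::field) \<Rightarrow> (nat \<Rightarrow> nat \<Rightarrow> 'k) \<Rightarrow> gvar \<Rightarrow> 'k coord" where
  "coord_change_var n Q Qi (Gv i j) = (\<Sum>a<n. \<Sum>c<n. cconst (Qi i a * Q c j) * cvar (Gv a c))"
| "coord_change_var n Q Qi (Gbv i j) = (\<Sum>a<n. \<Sum>c<n. cconst (Qi i a * Q c j) * cvar (Gbv a c))"

definition coord_change :: "nat \<Rightarrow> (nat \<Rightarrow> nat \<Rightarrow> 'k::field) \<Rightarrow> (nat \<Rightarrow> nat \<Rightarrow> 'k) \<Rightarrow> 'k coord \<Rightarrow> 'k coord" where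
  "coord_change n Q Qi f = psubst cconst (coord_change_var n Q Qi) f"

end

theory Submission
  imports Defs
begin

text \<open>The pairing of a word y_k1 ... y_km with a coordinate function f is the coefficient of
  t_1 ... t_m in f evaluated at the matrix G = (1 + t_1 rho_k1) ... (1 + t_m rho_km), with Gbar
  evaluated at (1 - t_m rho_km) ... (1 - t_1 rho_k1); here rho_k is the matrix of x \<mapsto> -[x, y_k]
  and t_1, ..., t_m are commuting variables of which only square-free monomials matter, so that
  1 + t rho behaves like exp (t rho). The right Leibniz identity says that each rho_k is a
  derivation of h; hence G is an automorphism with inverse Gbar modulo the squares t_p^2, and the
  ideal of O(Aut h) is killed. Splitting the square-free monomial t_1 ... t_m into two parts gives
  compatibility with the coproduct of U, concatenating words multiplies the matrices G and gives
  compatibility with the coproduct of O(Aut h), and the relations of U(h_Lie) hold because they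
  define derivations at the counit that vanish on the generators.

  Uniqueness holds since a Hopf pairing is determined by the values on the letters y_k against the
  generators, and the relation G Gbar = 1 forces the values against Gbar. Independence of the
  basis follows because a change of basis conjugates every rho_k, and conjugating G is the
  canonical identification of the two presentations of O(Aut h).\<close>

section \<open>Substitution into polynomials\<close>

definition is_ring_hom :: "('a::ring_1 \<Rightarrow> 'b::ring_1) \<Rightarrow> bool" where
  "is_ring_hom h \<longleftrightarrow> (\<forall>x y. h (x + y) = h x + h y) \<and> (\<forall>x y. h (x * y) = h x * h y) \<and> h 1 = 1"

lemma is_ring_hom_add: "is_ring_hom h \<Longrightarrow> h (x + y) = h x + h y"
  by (simp add: is_ring_hom_def)

lemma is_ring_hom_mult: "is_ring_hom h \<Longrightarrow> h (x * y) = h x * h y"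
  by (simp add: is_ring_hom_def)

lemma is_ring_hom_one: "is_ring_hom h \<Longrightarrow> h 1 = 1"
  by (simp add: is_ring_hom_def)

lemma is_ring_hom_zero: "is_ring_hom h \<Longrightarrow> h 0 = 0"
  using is_ring_hom_add[of h 0 0] by simp

lemma is_ring_hom_uminus: "is_ring_hom h \<Longrightarrow> h (- x) = - h x"
  using is_ring_hom_add[of h x "- x"] is_ring_hom_zero[of h] by (simp add: eq_neg_iff_add_eq_0 add.commute)

lemma is_ring_hom_diff: "is_ring_hom h \<Longrightarrow> h (x - y) = h x - h y"
  using is_ring_hom_add[of h x "- y"] is_ring_hom_uminus[of h y] by simp

lemma is_ring_hom_sum: "is_ring_hom h \<Longrightarrow> h (sum f A) = (\<Sum>a\<in>A. h (f a))"
  by (induction A rule: infinite_finite_induct) (auto simp: is_ring_hom_zero is_ring_hom_add)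

lemma is_ring_hom_prod: "is_ring_hom h \<Longrightarrow> h (prod f A) = (\<Prod>a\<in>A. h (f a))"
  by (induction A rule: infinite_finite_induct) (auto simp: is_ring_hom_one is_ring_hom_mult)

lemma is_ring_hom_power: "is_ring_hom h \<Longrightarrow> h (x ^ k) = h x ^ k"
  by (induction k) (auto simp: is_ring_hom_one is_ring_hom_mult)

lemma is_ring_hom_id: "is_ring_hom id"
  by (simp add: is_ring_hom_def)

lemma is_ring_hom_single_0: "is_ring_hom (\<lambda>c::'k::comm_ring_1. Poly_Mapping.single (0::'m::comm_monoid_add) c)"
  by (simp add: is_ring_hom_def single_add mult_single)

lemma lookup_single_0_mult:
  "Poly_Mapping.lookup (Poly_Mapping.single 0 c * G) m = c * Poly_Mapping.lookup G m"
  by (simp add: mult_map_scale_conv_mult[symmetric] Poly_Mapping.map.rep_eq when_def)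

lemma poly_mapping_sum_single:
  "(\<Sum>m\<in>Poly_Mapping.keys F. Poly_Mapping.single m (Poly_Mapping.lookup F m)) = F"
  by (rule poly_mapping_eqI) (simp add: lookup_sum lookup_single when_def in_keys_iff)

lemma single_mult_expand:
  fixes F G :: "'m::comm_monoid_add \<Rightarrow>\<^sub>0 'k::comm_semiring_1"
  shows "F * G = (\<Sum>a\<in>Poly_Mapping.keys F. \<Sum>b\<in>Poly_Mapping.keys G.
           Poly_Mapping.single (a + b) (Poly_Mapping.lookup F a * Poly_Mapping.lookup G b))"
proof -
  have "F * G = (\<Sum>a\<in>Poly_Mapping.keys F. Poly_Mapping.single a (Poly_Mapping.lookup F a)) *
                (\<Sum>b\<in>Poly_Mapping.keys G. Poly_Mapping.single b (Poly_Mapping.lookup G b))"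
    by (simp add: poly_mapping_sum_single)
  then show ?thesis
    by (simp add: sum_distrib_left sum_distrib_right mult_single) (rule sum.swap)
qed

lemma sum_swap_inner: "(\<Sum>a\<in>A. \<Sum>b\<in>B. \<Sum>c\<in>C. f a b c) = (\<Sum>a\<in>A. \<Sum>c\<in>C. \<Sum>b\<in>B. f a b c)"
  by (rule sum.cong[OF refl], rule sum.swap)

lemma sum_reverse3: "(\<Sum>a\<in>A. \<Sum>b\<in>B. \<Sum>c\<in>C. f a b c) = (\<Sum>c\<in>C. \<Sum>b\<in>B. \<Sum>a\<in>A. f a b c)"
  by (subst sum_swap_inner, subst sum.swap, rule sum_swap_inner)

lemma sum_rotate3: "(\<Sum>a\<in>A. \<Sum>b\<in>B. \<Sum>c\<in>C. f a b c) = (\<Sum>b\<in>B. \<Sum>c\<in>C. \<Sum>a\<in>A. f a b c)"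
  by (subst sum.swap, rule sum_swap_inner)

definition lin_extend :: "('k::comm_ring_1 \<Rightarrow> 'r::comm_ring_1) \<Rightarrow> ('m::comm_monoid_add \<Rightarrow> 'r) \<Rightarrow> ('m \<Rightarrow>\<^sub>0 'k) \<Rightarrow> 'r" where
  "lin_extend emb \<chi> F = (\<Sum>m\<in>Poly_Mapping.keys F. emb (Poly_Mapping.lookup F m) * \<chi> m)"

definition is_monoid_hom :: "('m::comm_monoid_add \<Rightarrow> 'r::comm_ring_1) \<Rightarrow> bool" where
  "is_monoid_hom \<chi> \<longleftrightarrow> (\<forall>a b. \<chi> (a + b) = \<chi> a * \<chi> b) \<and> \<chi> 0 = 1"

lemma lin_extend_superset:
  assumes "is_ring_hom emb" "finite A" "Poly_Mapping.keys F \<subseteq> A"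
  shows "lin_extend emb \<chi> F = (\<Sum>m\<in>A. emb (Poly_Mapping.lookup F m) * \<chi> m)"
  unfolding lin_extend_def
  by (rule sum.mono_neutral_left) (use assms in \<open>auto simp: is_ring_hom_zero in_keys_iff\<close>)

lemma lin_extend_add:
  assumes "is_ring_hom emb"
  shows "lin_extend emb \<chi> (F + G) = lin_extend emb \<chi> F + lin_extend emb \<chi> G"
proof -
  let ?A = "Poly_Mapping.keys F \<union> Poly_Mapping.keys G"
  have "lin_extend emb \<chi> (F + G) = (\<Sum>m\<in>?A. emb (Poly_Mapping.lookup (F + G) m) * \<chi> m)"
    using assms keys_add[of F G] by (intro lin_extend_superset) auto
  also have "\<dots> = (\<Sum>m\<in>?A. emb (Poly_Mapping.lookup F m) * \<chi> m) + (\<Sum>m\<in>?A. emb (Poly_Mapping.lookup G m) * \<chi> m)"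
    by (simp add: lookup_add is_ring_hom_add[OF assms] distrib_right sum.distrib)
  also have "\<dots> = lin_extend emb \<chi> F + lin_extend emb \<chi> G"
    using assms by (subst (1 2) lin_extend_superset[symmetric]) auto
  finally show ?thesis .
qed

lemma lin_extend_zero [simp]: "lin_extend emb \<chi> 0 = 0"
  by (simp add: lin_extend_def)

lemma lin_extend_sum: "is_ring_hom emb \<Longrightarrow> lin_extend emb \<chi> (sum f A) = (\<Sum>a\<in>A. lin_extend emb \<chi> (f a))"
  by (induction A rule: infinite_finite_induct) (auto simp: lin_extend_add)

lemma lin_extend_single: "is_ring_hom emb \<Longrightarrow> lin_extend emb \<chi> (Poly_Mapping.single m c) = emb c * \<chi> m"
  by (simp add: lin_extend_def is_ring_hom_zero)

lemma lin_extend_mult: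
  assumes "is_ring_hom emb" "is_monoid_hom \<chi>"
  shows "lin_extend emb \<chi> (F * G) = lin_extend emb \<chi> F * lin_extend emb \<chi> G"
proof -
  have "lin_extend emb \<chi> (F * G) = (\<Sum>a\<in>Poly_Mapping.keys F. \<Sum>b\<in>Poly_Mapping.keys G.
        emb (Poly_Mapping.lookup F a) * \<chi> a * (emb (Poly_Mapping.lookup G b) * \<chi> b))"
    using assms by (simp add: single_mult_expand[of F G] lin_extend_sum lin_extend_single
        is_ring_hom_mult is_monoid_hom_def mult_ac)
  also have "\<dots> = lin_extend emb \<chi> F * lin_extend emb \<chi> G"
    unfolding lin_extend_def sum_distrib_left sum_distrib_right by (subst sum.swap) (simp add: mult_ac)
  finally show ?thesis .
qed

lemma is_ring_hom_lin_extend: "is_ring_hom emb \<Longrightarrow> is_monoid_hom \<chi> \<Longrightarrow> is_ring_hom (lin_extend emb \<chi>)"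
  using lin_extend_single[of emb \<chi> 0 1] by (simp add: is_ring_hom_def lin_extend_add lin_extend_mult
      is_monoid_hom_def is_ring_hom_one)

definition monom_eval :: "('v \<Rightarrow> 'r::comm_ring_1) \<Rightarrow> ('v \<Rightarrow>\<^sub>0 nat) \<Rightarrow> 'r" where
  "monom_eval \<sigma> m = (\<Prod>x\<in>Poly_Mapping.keys m. \<sigma> x ^ Poly_Mapping.lookup m x)"

lemma monom_eval_superset:
  "finite A \<Longrightarrow> Poly_Mapping.keys m \<subseteq> A \<Longrightarrow> monom_eval \<sigma> m = (\<Prod>x\<in>A. \<sigma> x ^ Poly_Mapping.lookup m x)"
  unfolding monom_eval_def by (rule prod.mono_neutral_left) (auto simp: in_keys_iff)

lemma is_monoid_hom_monom_eval: "is_monoid_hom (monom_eval \<sigma>)"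
proof -
  have "monom_eval \<sigma> (a + b) = monom_eval \<sigma> a * monom_eval \<sigma> b" for a b
  proof -
    let ?A = "Poly_Mapping.keys a \<union> Poly_Mapping.keys b"
    have "monom_eval \<sigma> (a + b) = (\<Prod>x\<in>?A. \<sigma> x ^ Poly_Mapping.lookup (a + b) x)"
      using keys_add[of a b] by (intro monom_eval_superset) auto
    also have "\<dots> = (\<Prod>x\<in>?A. \<sigma> x ^ Poly_Mapping.lookup a x) * (\<Prod>x\<in>?A. \<sigma> x ^ Poly_Mapping.lookup b x)"
      by (simp add: lookup_add power_add prod.distrib)
    also have "\<dots> = monom_eval \<sigma> a * monom_eval \<sigma> b"
      by (subst (1 2) monom_eval_superset[symmetric]) auto
    finally show ?thesis .
  qed
  then show ?thesis by (simp add: is_monoid_hom_def monom_eval_def)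
qed

lemma psubst_eq_lin_extend: "psubst emb \<sigma> f = lin_extend emb (monom_eval \<sigma>) f"
  by (simp add: psubst_def lin_extend_def monom_eval_def)

lemma is_ring_hom_psubst: "is_ring_hom emb \<Longrightarrow> is_ring_hom (psubst emb \<sigma>)"
  unfolding psubst_eq_lin_extend[abs_def] by (rule is_ring_hom_lin_extend) (auto simp: is_monoid_hom_monom_eval)

lemma psubst_single: "is_ring_hom emb \<Longrightarrow> psubst emb \<sigma> (Poly_Mapping.single m c) = emb c * monom_eval \<sigma> m"
  by (simp add: psubst_eq_lin_extend lin_extend_single)

lemma psubst_var: "is_ring_hom emb \<Longrightarrow> psubst emb \<sigma> (Poly_Mapping.single (Poly_Mapping.single x 1) 1) = \<sigma> x"
  by (simp add: psubst_single monom_eval_def is_ring_hom_one)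

lemma psubst_const: "is_ring_hom emb \<Longrightarrow> psubst emb \<sigma> (Poly_Mapping.single 0 c) = emb c"
  by (simp add: psubst_single monom_eval_def)

lemma psubst_comp:
  assumes "is_ring_hom h" "is_ring_hom emb"
  shows "h (psubst emb \<sigma> f) = psubst (h \<circ> emb) (h \<circ> \<sigma>) f"
  using assms by (simp add: psubst_def is_ring_hom_sum is_ring_hom_mult is_ring_hom_prod is_ring_hom_power)

lemma psubst_cong:
  assumes "\<And>m x. m \<in> Poly_Mapping.keys f \<Longrightarrow> x \<in> Poly_Mapping.keys m \<Longrightarrow> \<sigma> x = \<tau> x"
  shows "psubst emb \<sigma> f = psubst emb \<tau> f"
  unfolding psubst_def using assms by (intro sum.cong refl arg_cong2[where f="(*)"] prod.cong) auto

lemma single_var_power: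
  "Poly_Mapping.single (Poly_Mapping.single x 1) (1::'k::comm_semiring_1) ^ e = Poly_Mapping.single (Poly_Mapping.single x e) 1"
  by (induction e) (auto simp: mult_single single_add[symmetric] add.commute)

lemma prod_single_one: "(\<Prod>x\<in>A. Poly_Mapping.single (g x) (1::'k::comm_semiring_1)) = Poly_Mapping.single (\<Sum>x\<in>A. g x) 1"
  by (induction A rule: infinite_finite_induct) (auto simp: mult_single)

lemma monom_eval_vars:
  "monom_eval (\<lambda>x. Poly_Mapping.single (Poly_Mapping.single x 1) (1::'k::comm_ring_1)) m = Poly_Mapping.single m 1"
  unfolding monom_eval_def single_var_power prod_single_one poly_mapping_sum_single ..

lemma psubst_vars_id:
  "psubst (\<lambda>c. Poly_Mapping.single 0 c) (\<lambda>x. Poly_Mapping.single (Poly_Mapping.single x 1) 1) f = (f :: ('v \<Rightarrow>\<^sub>0 nat) \<Rightarrow>\<^sub>0 'k::field)"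
  unfolding psubst_eq_lin_extend lin_extend_def monom_eval_vars
  by (simp add: mult_single poly_mapping_sum_single)

definition is_subring :: "'r::comm_ring_1 set \<Rightarrow> bool" where
  "is_subring R \<longleftrightarrow> 0 \<in> R \<and> 1 \<in> R \<and> (\<forall>x\<in>R. \<forall>y\<in>R. x + y \<in> R \<and> x * y \<in> R)"

lemma is_subring_sum: "is_subring R \<Longrightarrow> (\<And>a. a \<in> A \<Longrightarrow> f a \<in> R) \<Longrightarrow> sum f A \<in> R"
  by (induction A rule: infinite_finite_induct) (auto simp: is_subring_def)

lemma is_subring_prod: "is_subring R \<Longrightarrow> (\<And>a. a \<in> A \<Longrightarrow> f a \<in> R) \<Longrightarrow> prod f A \<in> R"
  by (induction A rule: infinite_finite_induct) (auto simp: is_subring_def)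

lemma is_subring_power: "is_subring R \<Longrightarrow> x \<in> R \<Longrightarrow> x ^ k \<in> R"
  by (induction k) (auto simp: is_subring_def)

lemma psubst_in_subring:
  assumes R: "is_subring R" and "\<And>c. emb c \<in> R"
    and "\<And>m x. m \<in> Poly_Mapping.keys f \<Longrightarrow> x \<in> Poly_Mapping.keys m \<Longrightarrow> \<sigma> x \<in> R"
  shows "psubst emb \<sigma> f \<in> R"
  unfolding psubst_def
proof (intro is_subring_sum[OF R])
  fix m assume m: "m \<in> Poly_Mapping.keys f"
  have "(\<Prod>x\<in>Poly_Mapping.keys m. \<sigma> x ^ Poly_Mapping.lookup m x) \<in> R"
    by (intro is_subring_prod is_subring_power R) (use assms m in auto)
  with assms(2) R show "emb (Poly_Mapping.lookup f m) * (\<Prod>x\<in>Poly_Mapping.keys m. \<sigma> x ^ Poly_Mapping.lookup m x) \<in> R"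
    unfolding is_subring_def by blast
qed

lemma poly_in_subring:
  fixes f :: "('v \<Rightarrow>\<^sub>0 nat) \<Rightarrow>\<^sub>0 'k::field"
  assumes "is_subring R" and "\<And>c. Poly_Mapping.single 0 c \<in> R"
    and "\<And>m x. m \<in> Poly_Mapping.keys f \<Longrightarrow> x \<in> Poly_Mapping.keys m \<Longrightarrow> Poly_Mapping.single (Poly_Mapping.single x 1) 1 \<in> R"
  shows "f \<in> R"
proof -
  have "psubst (\<lambda>c. Poly_Mapping.single 0 c) (\<lambda>x. Poly_Mapping.single (Poly_Mapping.single x 1) 1) f \<in> R"
    by (rule psubst_in_subring) (use assms in auto)
  then show ?thesis by (simp only: psubst_vars_id)
qed

lemma is_subring_keys_closed:
  assumes "P 0" and "\<And>a b. P a \<Longrightarrow> P b \<Longrightarrow> P (a + b)"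
  shows "is_subring {F :: 'm::comm_monoid_add \<Rightarrow>\<^sub>0 'k::comm_ring_1. \<forall>m\<in>Poly_Mapping.keys F. P m}"
  unfolding is_subring_def
proof (intro conjI ballI)
  fix x y :: "'m \<Rightarrow>\<^sub>0 'k"
  assume x: "x \<in> {F. \<forall>m\<in>Poly_Mapping.keys F. P m}" and y: "y \<in> {F. \<forall>m\<in>Poly_Mapping.keys F. P m}"
  then show "x + y \<in> {F. \<forall>m\<in>Poly_Mapping.keys F. P m}"
    using keys_add[of x y] by auto
  show "x * y \<in> {F. \<forall>m\<in>Poly_Mapping.keys F. P m}"
    using x y keys_mult[of x y] assms(2) by fastforce
qed (use assms(1) in auto)

section \<open>Square-free coefficients of polynomials in auxiliary variables\<close>

text \<open>Polynomials in commuting auxiliary variables t_0, t_1, ...; only their coefficients at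
  square-free monomials are ever read.\<close>

type_synonym 'k tpoly = "(nat \<Rightarrow>\<^sub>0 nat) \<Rightarrow>\<^sub>0 'k"

definition tvar :: "nat \<Rightarrow> 'k::comm_ring_1 tpoly" where
  "tvar p = Poly_Mapping.single (Poly_Mapping.single p 1) 1"

definition tconst :: "'k::comm_ring_1 \<Rightarrow> 'k tpoly" where
  "tconst c = Poly_Mapping.single 0 c"

definition sqfree_mono :: "nat set \<Rightarrow> (nat \<Rightarrow>\<^sub>0 nat)" where
  "sqfree_mono S = (\<Sum>i\<in>S. Poly_Mapping.single i 1)"

lemma is_ring_hom_tconst: "is_ring_hom tconst"
  unfolding tconst_def[abs_def] by (rule is_ring_hom_single_0)

lemma tconst_0 [simp]: "tconst 0 = 0"
  by (simp add: tconst_def)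

lemma tconst_1 [simp]: "tconst 1 = 1"
  by (simp add: tconst_def)

lemma tconst_add: "tconst (a + b) = tconst a + tconst b"
  by (rule is_ring_hom_add[OF is_ring_hom_tconst])

lemma tconst_mult: "tconst (a * b) = tconst a * tconst b"
  by (rule is_ring_hom_mult[OF is_ring_hom_tconst])

lemma tconst_sum: "tconst (sum f A) = (\<Sum>a\<in>A. tconst (f a))"
  by (rule is_ring_hom_sum[OF is_ring_hom_tconst])

lemma lookup_tconst_mult: "Poly_Mapping.lookup (tconst c * G) m = c * Poly_Mapping.lookup G m"
  by (simp add: tconst_def lookup_single_0_mult)

lemma tvar_nonzero: "tvar p \<noteq> (0 :: 'k::comm_ring_1 tpoly)"
  by (metis tvar_def lookup_single_eq one_neq_zero lookup_zero)

lemma lookup_sqfree_mono: "finite S \<Longrightarrow> Poly_Mapping.lookup (sqfree_mono S) i = (if i \<in> S then 1 else 0)"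
  by (simp add: sqfree_mono_def lookup_sum lookup_single when_def)

lemma keys_sqfree_mono: "finite S \<Longrightarrow> Poly_Mapping.keys (sqfree_mono S) = S"
  by (auto simp: in_keys_iff lookup_sqfree_mono split: if_splits)

lemma sqfree_mono_empty [simp]: "sqfree_mono {} = 0"
  by (simp add: sqfree_mono_def)

lemma sqfree_mono_add_diff: "finite W \<Longrightarrow> S \<subseteq> W \<Longrightarrow> sqfree_mono S + sqfree_mono (W - S) = sqfree_mono W"
  by (rule poly_mapping_eqI) (auto simp: lookup_add lookup_sqfree_mono finite_subset)

lemma sqfree_mono_split:
  assumes W: "finite W" and ab: "a + b = sqfree_mono W"
  shows "Poly_Mapping.keys a \<subseteq> W \<and> a = sqfree_mono (Poly_Mapping.keys a) \<and> b = sqfree_mono (W - Poly_Mapping.keys a)"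
proof -
  have l: "Poly_Mapping.lookup a i + Poly_Mapping.lookup b i = (if i \<in> W then 1 else 0)" for i
    using arg_cong[OF ab, of "\<lambda>f. Poly_Mapping.lookup f i"] W by (simp add: lookup_add lookup_sqfree_mono)
  have "Poly_Mapping.keys a \<subseteq> W"
  proof
    fix i assume "i \<in> Poly_Mapping.keys a"
    with l[of i] show "i \<in> W" by (auto simp: in_keys_iff split: if_splits)
  qed
  moreover have "a = sqfree_mono (Poly_Mapping.keys a)"
  proof (rule poly_mapping_eqI)
    fix i show "Poly_Mapping.lookup a i = Poly_Mapping.lookup (sqfree_mono (Poly_Mapping.keys a)) i"
      using l[of i] by (simp add: lookup_sqfree_mono in_keys_iff split: if_splits)
  qed
  moreover have "b = sqfree_mono (W - Poly_Mapping.keys a)"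
  proof (rule poly_mapping_eqI)
    fix i show "Poly_Mapping.lookup b i = Poly_Mapping.lookup (sqfree_mono (W - Poly_Mapping.keys a)) i"
      using l[of i] W by (auto simp: lookup_sqfree_mono in_keys_iff split: if_splits)
  qed
  ultimately show ?thesis by blast
qed

lemma sum_Pow_sqfree_mono_split:
  assumes W: "finite W"
  shows "(\<Sum>S\<in>Pow W. (if a = sqfree_mono S \<and> b = sqfree_mono (W - S) then 1 else 0::'k::comm_ring_1))
       = (if a + b = sqfree_mono W then 1 else 0)"
proof (cases "a + b = sqfree_mono W")
  case True
  note a = sqfree_mono_split[OF W True]
  have "(\<Sum>S\<in>Pow W. (if a = sqfree_mono S \<and> b = sqfree_mono (W - S) then 1 else 0::'k))
      = (\<Sum>S\<in>Pow W. (if S = Poly_Mapping.keys a then 1 else 0))"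
    using a W by (intro sum.cong refl) (metis PowD finite_subset keys_sqfree_mono)
  also have "\<dots> = 1"
    using a W by (simp add: sum.delta')
  finally show ?thesis using True by simp
next
  case False
  have "(if a = sqfree_mono S \<and> b = sqfree_mono (W - S) then 1 else 0::'k) = 0" if "S \<in> Pow W" for S
    using False sqfree_mono_add_diff[OF W, of S] that by auto
  then show ?thesis using False by simp
qed

lemma lookup_mult_sqfree_mono:
  fixes F G :: "'k::comm_ring_1 tpoly"
  assumes W: "finite W"
  shows "Poly_Mapping.lookup (F * G) (sqfree_mono W)
       = (\<Sum>S\<in>Pow W. Poly_Mapping.lookup F (sqfree_mono S) * Poly_Mapping.lookup G (sqfree_mono (W - S)))"
proof -
  let ?F = "Poly_Mapping.lookup F" and ?G = "Poly_Mapping.lookup G"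
  let ?\<delta> = "\<lambda>a b S. if a = sqfree_mono S \<and> b = sqfree_mono (W - S) then 1 else 0 :: 'k"
  have "Poly_Mapping.lookup (F * G) (sqfree_mono W) =
      (\<Sum>a\<in>Poly_Mapping.keys F. \<Sum>b\<in>Poly_Mapping.keys G. ?F a * ?G b * (if a + b = sqfree_mono W then 1 else 0))"
    by (simp add: single_mult_expand[of F G] lookup_sum lookup_single when_def) (intro sum.cong refl, simp)
  also have "\<dots> = (\<Sum>a\<in>Poly_Mapping.keys F. \<Sum>b\<in>Poly_Mapping.keys G. \<Sum>S\<in>Pow W. ?F a * ?G b * ?\<delta> a b S)"
    by (simp only: sum_distrib_left[symmetric] sum_Pow_sqfree_mono_split[OF W])
  also have "\<dots> = (\<Sum>S\<in>Pow W. \<Sum>a\<in>Poly_Mapping.keys F. \<Sum>b\<in>Poly_Mapping.keys G. ?F a * ?G b * ?\<delta> a b S)"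
    by (subst sum.swap) (simp add: sum.swap[of _ "Pow W"])
  also have "\<dots> = (\<Sum>S\<in>Pow W. ?F (sqfree_mono S) * ?G (sqfree_mono (W - S)))"
  proof (rule sum.cong[OF refl])
    fix S
    have "(\<Sum>a\<in>Poly_Mapping.keys F. \<Sum>b\<in>Poly_Mapping.keys G. ?F a * ?G b * ?\<delta> a b S)
       = (\<Sum>a\<in>Poly_Mapping.keys F. ?F a * (if a = sqfree_mono S then 1 else 0)) *
         (\<Sum>b\<in>Poly_Mapping.keys G. ?G b * (if b = sqfree_mono (W - S) then 1 else 0))"
      by (simp add: sum_product) (intro sum.cong refl, simp)
    also have "\<dots> = ?F (sqfree_mono S) * ?G (sqfree_mono (W - S))"
      by (simp add: sum.delta in_keys_iff if_distrib cong: if_cong)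
    finally show "(\<Sum>a\<in>Poly_Mapping.keys F. \<Sum>b\<in>Poly_Mapping.keys G. ?F a * ?G b * ?\<delta> a b S)
       = ?F (sqfree_mono S) * ?G (sqfree_mono (W - S))" .
  qed
  finally show ?thesis .
qed

lemma is_ring_hom_lookup_0: "is_ring_hom (\<lambda>F::'k::comm_ring_1 tpoly. Poly_Mapping.lookup F 0)"
proof -
  have "Poly_Mapping.lookup (F * G) 0 = Poly_Mapping.lookup F 0 * Poly_Mapping.lookup G 0" for F G :: "'k tpoly"
    using lookup_mult_sqfree_mono[of "{}" F G] by simp
  then show ?thesis by (simp add: is_ring_hom_def lookup_add)
qed

definition tvar_relabel :: "nat set \<Rightarrow> (nat \<Rightarrow> nat) \<Rightarrow> nat \<Rightarrow> 'k::comm_ring_1 tpoly" where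
  "tvar_relabel S g p = (if p \<in> S then tvar (g p) else 0)"

definition rename_mono :: "(nat \<Rightarrow> nat) \<Rightarrow> (nat \<Rightarrow>\<^sub>0 nat) \<Rightarrow> (nat \<Rightarrow>\<^sub>0 nat)" where
  "rename_mono g m = (\<Sum>x\<in>Poly_Mapping.keys m. Poly_Mapping.single (g x) (Poly_Mapping.lookup m x))"

lemma lookup_rename_mono:
  assumes "Poly_Mapping.keys m \<subseteq> S" "inj_on g S" "z \<in> S"
  shows "Poly_Mapping.lookup (rename_mono g m) (g z) = Poly_Mapping.lookup m z"
proof -
  have "Poly_Mapping.lookup (rename_mono g m) (g z) = (\<Sum>x\<in>Poly_Mapping.keys m. if x = z then Poly_Mapping.lookup m x else 0)"
    unfolding rename_mono_def lookup_sum
    by (intro sum.cong refl) (use assms in \<open>auto simp: lookup_single when_def inj_on_def\<close>)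
  also have "\<dots> = Poly_Mapping.lookup m z" by (simp add: sum.delta in_keys_iff)
  finally show ?thesis .
qed

lemma lookup_rename_mono_outside:
  "Poly_Mapping.keys m \<subseteq> S \<Longrightarrow> y \<notin> g ` S \<Longrightarrow> Poly_Mapping.lookup (rename_mono g m) y = 0"
  unfolding rename_mono_def lookup_sum by (intro sum.neutral) (auto simp: lookup_single when_def)

lemma rename_mono_eq_sqfree_mono_iff:
  assumes S: "finite S" and g: "inj_on g S" and m: "Poly_Mapping.keys m \<subseteq> S"
  shows "rename_mono g m = sqfree_mono (g ` S) \<longleftrightarrow> m = sqfree_mono S"
proof
  assume Y: "rename_mono g m = sqfree_mono (g ` S)"
  show "m = sqfree_mono S"
  proof (rule poly_mapping_eqI)
    fix z show "Poly_Mapping.lookup m z = Poly_Mapping.lookup (sqfree_mono S) z"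
      using lookup_rename_mono[OF m g, of z] Y S m by (auto simp: lookup_sqfree_mono in_keys_iff)
  qed
next
  assume "m = sqfree_mono S"
  show "rename_mono g m = sqfree_mono (g ` S)"
  proof (rule poly_mapping_eqI)
    fix y show "Poly_Mapping.lookup (rename_mono g m) y = Poly_Mapping.lookup (sqfree_mono (g ` S)) y"
      using lookup_rename_mono[OF m g] lookup_rename_mono_outside[OF m, of y g] \<open>m = sqfree_mono S\<close> S
      by (cases "y \<in> g ` S") (auto simp: lookup_sqfree_mono)
  qed
qed

lemma monom_eval_tvar_relabel:
  "monom_eval (tvar_relabel S g :: nat \<Rightarrow> 'k::comm_ring_1 tpoly) m
     = (if Poly_Mapping.keys m \<subseteq> S then Poly_Mapping.single (rename_mono g m) 1 else 0)"
proof (cases "Poly_Mapping.keys m \<subseteq> S")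
  case True
  have "monom_eval (tvar_relabel S g :: nat \<Rightarrow> 'k tpoly) m
      = (\<Prod>x\<in>Poly_Mapping.keys m. Poly_Mapping.single (Poly_Mapping.single (g x) (Poly_Mapping.lookup m x)) 1)"
    unfolding monom_eval_def using True
    by (intro prod.cong refl) (auto simp: tvar_relabel_def tvar_def single_var_power[simplified])
  then show ?thesis using True by (simp add: prod_single_one rename_mono_def)
next
  case False
  then obtain x where x: "x \<in> Poly_Mapping.keys m" "x \<notin> S" by auto
  then have "monom_eval (tvar_relabel S g :: nat \<Rightarrow> 'k tpoly) m = 0"
    unfolding monom_eval_def by (intro prod_zero) (auto simp: tvar_relabel_def in_keys_iff zero_power)
  with False show ?thesis by simp
qed

lemma lookup_monom_eval_relabel:
  assumes S: "finite S" and g: "inj_on g S"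
  shows "Poly_Mapping.lookup (monom_eval (tvar_relabel S g :: nat \<Rightarrow> 'k::comm_ring_1 tpoly) m) (sqfree_mono (g ` S))
       = (if m = sqfree_mono S then 1 else 0)"
  using rename_mono_eq_sqfree_mono_iff[OF S g] keys_sqfree_mono[OF S]
  by (auto simp: monom_eval_tvar_relabel lookup_single when_def)

lemma lookup_psubst_relabel:
  assumes S: "finite S" and g: "inj_on g S"
  shows "Poly_Mapping.lookup (psubst tconst (tvar_relabel S g) F) (sqfree_mono (g ` S)) = Poly_Mapping.lookup (F::'k::field tpoly) (sqfree_mono S)"
proof -
  have "Poly_Mapping.lookup (psubst tconst (tvar_relabel S g) F) (sqfree_mono (g ` S))
      = (\<Sum>m\<in>Poly_Mapping.keys F. Poly_Mapping.lookup F m * (if m = sqfree_mono S then 1 else 0))"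
    by (simp add: psubst_eq_lin_extend lin_extend_def lookup_sum lookup_tconst_mult lookup_monom_eval_relabel[OF S g])
  also have "\<dots> = Poly_Mapping.lookup F (sqfree_mono S)"
    by (simp add: sum.delta in_keys_iff if_distrib cong: if_cong)
  finally show ?thesis .
qed

definition tvars_in :: "nat set \<Rightarrow> 'k::comm_ring_1 tpoly \<Rightarrow> bool" where
  "tvars_in V F \<longleftrightarrow> (\<forall>m\<in>Poly_Mapping.keys F. Poly_Mapping.keys m \<subseteq> V)"

lemma is_subring_tvars_in: "is_subring {F. tvars_in V F}"
  unfolding tvars_in_def
proof (rule is_subring_keys_closed)
  fix a b :: "nat \<Rightarrow>\<^sub>0 nat"
  assume "Poly_Mapping.keys a \<subseteq> V" "Poly_Mapping.keys b \<subseteq> V"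
  then show "Poly_Mapping.keys (a + b) \<subseteq> V" using keys_add[of a b] by blast
qed simp

lemma tvars_in_zero [simp]: "tvars_in V 0"
  by (simp add: tvars_in_def)

lemma tvars_in_add: "tvars_in V x \<Longrightarrow> tvars_in V y \<Longrightarrow> tvars_in V (x + y)"
  using is_subring_tvars_in[of V] unfolding is_subring_def by blast

lemma tvars_in_mult: "tvars_in V x \<Longrightarrow> tvars_in V y \<Longrightarrow> tvars_in V (x * y)"
  using is_subring_tvars_in[of V] unfolding is_subring_def by blast

lemma tvars_in_uminus: "tvars_in V x \<Longrightarrow> tvars_in V (- x)"
  by (simp add: tvars_in_def)

lemma tvars_in_diff: "tvars_in V x \<Longrightarrow> tvars_in V y \<Longrightarrow> tvars_in V (x - y)"
  unfolding diff_conv_add_uminus by (intro tvars_in_add tvars_in_uminus)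

lemma tvars_in_sum: "(\<And>a. a \<in> A \<Longrightarrow> tvars_in V (f a)) \<Longrightarrow> tvars_in V (sum f A)"
  using is_subring_sum[OF is_subring_tvars_in, of A f V] by simp

lemma tvars_in_tconst: "tvars_in V (tconst c)"
  by (simp add: tvars_in_def tconst_def)

lemma tvars_in_tvar: "p \<in> V \<Longrightarrow> tvars_in V (tvar p)"
  by (simp add: tvars_in_def tvar_def)

lemma lookup_sqfree_mono_outside:
  "tvars_in V F \<Longrightarrow> finite S \<Longrightarrow> \<not> S \<subseteq> V \<Longrightarrow> Poly_Mapping.lookup F (sqfree_mono S) = 0"
  by (metis in_keys_iff keys_sqfree_mono tvars_in_def)

lemma lookup_mult_sqfree_mono_disjoint:
  fixes F G :: "'k::comm_ring_1 tpoly"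
  assumes F: "tvars_in V F" and G: "tvars_in W G" and VW: "finite V" "finite W" "V \<inter> W = {}"
  shows "Poly_Mapping.lookup (F * G) (sqfree_mono (V \<union> W))
       = Poly_Mapping.lookup F (sqfree_mono V) * Poly_Mapping.lookup G (sqfree_mono W)"
proof -
  have "Poly_Mapping.lookup F (sqfree_mono S) * Poly_Mapping.lookup G (sqfree_mono (V \<union> W - S)) = 0"
    if "S \<subseteq> V \<union> W" "S \<noteq> V" for S
  proof (cases "S \<subseteq> V")
    case True
    with that VW have "\<not> V \<union> W - S \<subseteq> W" by blast
    then show ?thesis using lookup_sqfree_mono_outside[OF G] VW by simp
  next
    case False
    have "finite S" using that VW finite_subset by blast
    then show ?thesis using lookup_sqfree_mono_outside[OF F] False by simp
  qed
  moreover have "V \<union> W - V = W" using VW by blast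
  ultimately show ?thesis
    using VW by (simp add: lookup_mult_sqfree_mono sum.remove[of "Pow (V \<union> W)" V])
qed

definition sqfree_null :: "'k::comm_ring_1 tpoly set" where
  "sqfree_null = {F. \<forall>S. finite S \<longrightarrow> Poly_Mapping.lookup F (sqfree_mono S) = 0}"

lemma sqfree_null_zero [simp]: "0 \<in> sqfree_null"
  by (simp add: sqfree_null_def)

lemma sqfree_null_add: "F \<in> sqfree_null \<Longrightarrow> G \<in> sqfree_null \<Longrightarrow> F + G \<in> sqfree_null"
  by (simp add: sqfree_null_def lookup_add)

lemma sqfree_null_uminus: "F \<in> sqfree_null \<Longrightarrow> - F \<in> sqfree_null"
  by (simp add: sqfree_null_def)

lemma sqfree_null_sum: "(\<And>a. a \<in> A \<Longrightarrow> f a \<in> sqfree_null) \<Longrightarrow> sum f A \<in> sqfree_null"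
  by (induction A rule: infinite_finite_induct) (auto simp: sqfree_null_add)

lemma sqfree_null_mult_left: "F \<in> sqfree_null \<Longrightarrow> G * F \<in> sqfree_null"
  unfolding sqfree_null_def by (auto simp: lookup_mult_sqfree_mono intro!: sum.neutral)

lemma sqfree_null_mult_right: "F \<in> sqfree_null \<Longrightarrow> F * G \<in> sqfree_null"
  using sqfree_null_mult_left[of F G] by (simp add: mult.commute)

lemma tvar_square_sqfree_null: "tvar p * tvar p \<in> (sqfree_null :: 'k::comm_ring_1 tpoly set)"
proof -
  have "tvar p * tvar p = (Poly_Mapping.single (Poly_Mapping.single p 2) 1 :: 'k tpoly)"
    by (simp add: tvar_def mult_single single_add[symmetric] numeral_2_eq_2)
  moreover have "Poly_Mapping.single p 2 \<noteq> sqfree_mono S" if "finite S" for S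
  proof
    assume "Poly_Mapping.single p 2 = sqfree_mono S"
    then have "Poly_Mapping.lookup (Poly_Mapping.single p (2::nat)) p = Poly_Mapping.lookup (sqfree_mono S) p"
      by simp
    with that show False by (simp add: lookup_sqfree_mono split: if_splits)
  qed
  ultimately show ?thesis by (simp add: sqfree_null_def lookup_single when_def)
qed

section \<open>Square matrices indexed by natural numbers\<close>

definition mat_mul :: "nat \<Rightarrow> (nat \<Rightarrow> nat \<Rightarrow> 'a::comm_ring_1) \<Rightarrow> (nat \<Rightarrow> nat \<Rightarrow> 'a) \<Rightarrow> nat \<Rightarrow> nat \<Rightarrow> 'a" where
  "mat_mul n A B = (\<lambda>i j. \<Sum>k<n. A i k * B k j)"

definition mat_id :: "nat \<Rightarrow> nat \<Rightarrow> 'a::comm_ring_1" where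
  "mat_id = (\<lambda>i j. if i = j then 1 else 0)"

definition mat_eq_on :: "nat \<Rightarrow> (nat \<Rightarrow> nat \<Rightarrow> 'a) \<Rightarrow> (nat \<Rightarrow> nat \<Rightarrow> 'a) \<Rightarrow> bool" where
  "mat_eq_on n X Y \<longleftrightarrow> (\<forall>i<n. \<forall>j<n. X i j = Y i j)"

lemma sum_mat_id_left: "i < n \<Longrightarrow> (\<Sum>k<n. mat_id i k * t k) = t i"
proof -
  have "(\<Sum>k<n. mat_id i k * t k) = (\<Sum>k<n. if i = k then t k else 0)"
    by (intro sum.cong) (auto simp: mat_id_def)
  then show "i < n \<Longrightarrow> ?thesis" by simp
qed

lemma sum_mat_id_right: "j < n \<Longrightarrow> (\<Sum>k<n. t k * mat_id k j) = t j"
proof -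
  have "(\<Sum>k<n. t k * mat_id k j) = (\<Sum>k<n. if k = j then t k else 0)"
    by (intro sum.cong) (auto simp: mat_id_def)
  then show "j < n \<Longrightarrow> ?thesis" by simp
qed

lemma mat_mul_assoc: "mat_mul n (mat_mul n A B) C = mat_mul n A (mat_mul n B C)"
  unfolding mat_mul_def fun_eq_iff sum_distrib_left sum_distrib_right
  by (intro allI, subst sum.swap, simp add: mult.assoc)

lemma mat_mul_id_left: "i < n \<Longrightarrow> mat_mul n mat_id A i j = A i j"
  by (simp add: mat_mul_def sum_mat_id_left)

lemma mat_mul_id_right: "j < n \<Longrightarrow> mat_mul n A mat_id i j = A i j"
  by (simp add: mat_mul_def sum_mat_id_right)

lemma mat_mul_cong:
  "(\<And>k. k < n \<Longrightarrow> A i k = A' i k) \<Longrightarrow> (\<And>k. k < n \<Longrightarrow> B k j = B' k j) \<Longrightarrow> mat_mul n A B i j = mat_mul n A' B' i j"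
  by (simp add: mat_mul_def)

lemma is_ring_hom_mat_mul:
  "is_ring_hom h \<Longrightarrow> h (mat_mul n A B i j) = mat_mul n (\<lambda>i j. h (A i j)) (\<lambda>i j. h (B i j)) i j"
  by (simp add: mat_mul_def is_ring_hom_sum is_ring_hom_mult)

lemma is_ring_hom_mat_id: "is_ring_hom h \<Longrightarrow> h (mat_id i j) = mat_id i j"
  by (simp add: mat_id_def is_ring_hom_one is_ring_hom_zero)

lemma mat_eq_on_refl: "mat_eq_on n X X"
  by (simp add: mat_eq_on_def)

lemma mat_eq_on_sym: "mat_eq_on n X Y \<Longrightarrow> mat_eq_on n Y X"
  by (simp add: mat_eq_on_def)

lemma mat_eq_on_trans [trans]: "mat_eq_on n X Y \<Longrightarrow> mat_eq_on n Y Z \<Longrightarrow> mat_eq_on n X Z"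
  by (simp add: mat_eq_on_def)

lemma mat_eq_on_mat_mul: "mat_eq_on n X X' \<Longrightarrow> mat_eq_on n Y Y' \<Longrightarrow> mat_eq_on n (mat_mul n X Y) (mat_mul n X' Y')"
  unfolding mat_eq_on_def by (auto intro!: mat_mul_cong)

lemma mat_eq_on_id_left: "mat_eq_on n (mat_mul n mat_id X) X"
  by (simp add: mat_eq_on_def mat_mul_id_left)

lemma mat_eq_on_id_right: "mat_eq_on n (mat_mul n X mat_id) X"
  by (simp add: mat_eq_on_def mat_mul_id_right)

definition mat_conj :: "nat \<Rightarrow> (nat \<Rightarrow> nat \<Rightarrow> 'a::comm_ring_1) \<Rightarrow> (nat \<Rightarrow> nat \<Rightarrow> 'a) \<Rightarrow> (nat \<Rightarrow> nat \<Rightarrow> 'a) \<Rightarrow> nat \<Rightarrow> nat \<Rightarrow> 'a" where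
  "mat_conj n P Pi X = mat_mul n (mat_mul n Pi X) P"

lemma mat_conj_mult:
  assumes "mat_eq_on n (mat_mul n P Pi) mat_id"
  shows "mat_eq_on n (mat_mul n (mat_conj n P Pi X) (mat_conj n P Pi Y)) (mat_conj n P Pi (mat_mul n X Y))"
proof -
  have "mat_eq_on n (mat_mul n (mat_mul n Pi X) (mat_mul n (mat_mul n P Pi) (mat_mul n Y P)))
      (mat_mul n (mat_mul n Pi X) (mat_mul n mat_id (mat_mul n Y P)))"
    by (intro mat_eq_on_mat_mul mat_eq_on_refl assms)
  also have "mat_eq_on n \<dots> (mat_mul n (mat_mul n Pi X) (mat_mul n Y P))"
    by (intro mat_eq_on_mat_mul mat_eq_on_refl mat_eq_on_id_left)
  finally show ?thesis
    unfolding mat_conj_def by (simp only: mat_mul_assoc)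
qed

lemma mat_conj_id:
  assumes "mat_eq_on n (mat_mul n Pi P) mat_id"
  shows "mat_eq_on n (mat_conj n P Pi mat_id) mat_id"
  unfolding mat_conj_def
  by (rule mat_eq_on_trans[OF mat_eq_on_mat_mul[OF mat_eq_on_id_right mat_eq_on_refl] assms])

section \<open>Evaluation of coordinate functions at a generic point\<close>

text \<open>A list [(c_1, A_1), ..., (c_m, A_m)] stands for the point G = (1 + c_1 A_1) ... (1 + c_m A_m),
  Gbar = (1 - c_m A_m) ... (1 - c_1 A_1) of the matrix group, and word_pairing n [A_1, ..., A_m] f
  is the coefficient of t_0 ... t_(m-1) in f evaluated at the point with c_p = t_(p-1).\<close>

definition one_plus_mat :: "'k::comm_ring_1 tpoly \<Rightarrow> (nat \<Rightarrow> nat \<Rightarrow> 'k) \<Rightarrow> nat \<Rightarrow> nat \<Rightarrow> 'k tpoly" where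
  "one_plus_mat c A = (\<lambda>i j. mat_id i j + c * tconst (A i j))"

definition one_minus_mat :: "'k::comm_ring_1 tpoly \<Rightarrow> (nat \<Rightarrow> nat \<Rightarrow> 'k) \<Rightarrow> nat \<Rightarrow> nat \<Rightarrow> 'k tpoly" where
  "one_minus_mat c A = (\<lambda>i j. mat_id i j - c * tconst (A i j))"

fun generic_mat :: "nat \<Rightarrow> ('k::comm_ring_1 tpoly \<times> (nat \<Rightarrow> nat \<Rightarrow> 'k)) list \<Rightarrow> nat \<Rightarrow> nat \<Rightarrow> 'k tpoly" where
  "generic_mat n [] = mat_id"
| "generic_mat n ((c, A) # L) = mat_mul n (one_plus_mat c A) (generic_mat n L)"

fun generic_mat_inv :: "nat \<Rightarrow> ('k::comm_ring_1 tpoly \<times> (nat \<Rightarrow> nat \<Rightarrow> 'k)) list \<Rightarrow> nat \<Rightarrow> nat \<Rightarrow> 'k tpoly" where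
  "generic_mat_inv n [] = mat_id"
| "generic_mat_inv n ((c, A) # L) = mat_mul n (generic_mat_inv n L) (one_minus_mat c A)"

fun generic_val :: "nat \<Rightarrow> ('k::comm_ring_1 tpoly \<times> (nat \<Rightarrow> nat \<Rightarrow> 'k)) list \<Rightarrow> gvar \<Rightarrow> 'k tpoly" where
  "generic_val n L (Gv i j) = (if i < n \<and> j < n then generic_mat n L i j else 0)"
| "generic_val n L (Gbv i j) = (if i < n \<and> j < n then generic_mat_inv n L i j else 0)"

definition generic_eval :: "nat \<Rightarrow> ('k::field tpoly \<times> (nat \<Rightarrow> nat \<Rightarrow> 'k)) list \<Rightarrow> 'k coord \<Rightarrow> 'k tpoly" where
  "generic_eval n L = psubst tconst (generic_val n L)"

definition tagged :: "(nat \<Rightarrow> nat \<Rightarrow> 'k::comm_ring_1) list \<Rightarrow> ('k tpoly \<times> (nat \<Rightarrow> nat \<Rightarrow> 'k)) list" where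
  "tagged As = zip (map tvar [0..<length As]) As"

definition word_pairing :: "nat \<Rightarrow> (nat \<Rightarrow> nat \<Rightarrow> 'k::field) list \<Rightarrow> 'k coord \<Rightarrow> 'k" where
  "word_pairing n As f = Poly_Mapping.lookup (generic_eval n (tagged As) f) (sqfree_mono {..<length As})"

lemma is_ring_hom_generic_eval: "is_ring_hom (generic_eval n L)"
  unfolding generic_eval_def by (rule is_ring_hom_psubst[OF is_ring_hom_tconst])

lemma generic_eval_cvar: "generic_eval n L (cvar x) = generic_val n L x"
  unfolding generic_eval_def cvar_def by (rule psubst_var[OF is_ring_hom_tconst])

lemma generic_eval_cconst: "generic_eval n L (cconst c) = tconst c"
  unfolding generic_eval_def cconst_def by (rule psubst_const[OF is_ring_hom_tconst])

lemma tvars_in_mat_id: "tvars_in V (mat_id i j)"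
  by (simp add: mat_id_def tvars_in_def)

lemma generic_mat_append: "i < n \<Longrightarrow> generic_mat n (L1 @ L2) i j = mat_mul n (generic_mat n L1) (generic_mat n L2) i j"
proof (induction L1 arbitrary: i j)
  case Nil then show ?case by (simp add: mat_mul_id_left)
next
  case (Cons x L1)
  obtain c A where x: "x = (c, A)" by (cases x)
  have "generic_mat n ((x # L1) @ L2) i j = mat_mul n (one_plus_mat c A) (mat_mul n (generic_mat n L1) (generic_mat n L2)) i j"
    using Cons.IH by (simp add: x) (intro mat_mul_cong, auto)
  then show ?case by (simp add: x mat_mul_assoc)
qed

lemma generic_mat_inv_append: "j < n \<Longrightarrow> generic_mat_inv n (L1 @ L2) i j = mat_mul n (generic_mat_inv n L2) (generic_mat_inv n L1) i j"
proof (induction L1 arbitrary: i j)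
  case Nil then show ?case by (simp add: mat_mul_id_right)
next
  case (Cons x L1)
  obtain c A where x: "x = (c, A)" by (cases x)
  have "generic_mat_inv n ((x # L1) @ L2) i j = mat_mul n (mat_mul n (generic_mat_inv n L2) (generic_mat_inv n L1)) (one_minus_mat c A) i j"
    using Cons.IH by (simp add: x) (intro mat_mul_cong, auto)
  then show ?case by (simp add: x mat_mul_assoc)
qed

lemma generic_mat_map:
  assumes h: "is_ring_hom h" and hK: "\<And>c. h (tconst c) = tconst c"
  shows "h (generic_mat n L i j) = generic_mat n (map (\<lambda>(c, A). (h c, A)) L) i j"
proof (induction L arbitrary: i j)
  case Nil then show ?case by (simp add: is_ring_hom_mat_id[OF h])
next
  case (Cons x L)
  obtain c A where x: "x = (c, A)" by (cases x)
  have "h (generic_mat n (x # L) i j) = mat_mul n (\<lambda>i j. h (one_plus_mat c A i j)) (\<lambda>i j. h (generic_mat n L i j)) i j"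
    by (simp add: x is_ring_hom_mat_mul[OF h])
  also have "\<dots> = mat_mul n (one_plus_mat (h c) A) (generic_mat n (map (\<lambda>(c, A). (h c, A)) L)) i j"
    unfolding one_plus_mat_def is_ring_hom_add[OF h] is_ring_hom_mult[OF h] is_ring_hom_mat_id[OF h] hK Cons.IH ..
  finally show ?case by (simp add: x)
qed

lemma generic_mat_inv_map:
  assumes h: "is_ring_hom h" and hK: "\<And>c. h (tconst c) = tconst c"
  shows "h (generic_mat_inv n L i j) = generic_mat_inv n (map (\<lambda>(c, A). (h c, A)) L) i j"
proof (induction L arbitrary: i j)
  case Nil then show ?case by (simp add: is_ring_hom_mat_id[OF h])
next
  case (Cons x L)
  obtain c A where x: "x = (c, A)" by (cases x)
  have "h (generic_mat_inv n (x # L) i j) = mat_mul n (\<lambda>i j. h (generic_mat_inv n L i j)) (\<lambda>i j. h (one_minus_mat c A i j)) i j"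
    by (simp add: x is_ring_hom_mat_mul[OF h])
  also have "\<dots> = mat_mul n (generic_mat_inv n (map (\<lambda>(c, A). (h c, A)) L)) (one_minus_mat (h c) A) i j"
    unfolding one_minus_mat_def is_ring_hom_diff[OF h] is_ring_hom_mult[OF h] is_ring_hom_mat_id[OF h] hK Cons.IH ..
  finally show ?case by (simp add: x)
qed

lemma generic_val_map:
  assumes h: "is_ring_hom h" and hK: "\<And>c. h (tconst c) = tconst c"
  shows "h (generic_val n L x) = generic_val n (map (\<lambda>(c, A). (h c, A)) L) x"
  by (cases x) (simp_all add: generic_mat_map[OF h hK] generic_mat_inv_map[OF h hK] is_ring_hom_zero[OF h] del: generic_mat.simps generic_mat_inv.simps)

lemma generic_eval_map:
  assumes "is_ring_hom h" "\<And>c. h (tconst c) = tconst c"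
  shows "h (generic_eval n L f) = generic_eval n (map (\<lambda>(c, A). (h c, A)) L) f"
  unfolding generic_eval_def
  by (subst psubst_comp[OF assms(1) is_ring_hom_tconst]) (simp add: comp_def assms(2) generic_val_map[OF assms])

lemma generic_mat_filter: "i < n \<Longrightarrow> j < n \<Longrightarrow> generic_mat n L i j = generic_mat n (filter (\<lambda>x. fst x \<noteq> 0) L) i j"
proof (induction L arbitrary: i j)
  case Nil then show ?case by simp
next
  case (Cons x L)
  obtain c A where x: "x = (c, A)" by (cases x)
  show ?case
  proof (cases "c = 0")
    case True
    have "generic_mat n (x # L) i j = mat_mul n mat_id (generic_mat n L) i j"
      by (simp add: x True one_plus_mat_def) 
    also have "\<dots> = generic_mat n L i j" using Cons by (simp add: mat_mul_id_left)
    finally show ?thesis using Cons True x by simp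
  next
    case False
    then show ?thesis using Cons by (simp add: x) (intro mat_mul_cong, auto)
  qed
qed

lemma generic_mat_inv_filter: "i < n \<Longrightarrow> j < n \<Longrightarrow> generic_mat_inv n L i j = generic_mat_inv n (filter (\<lambda>x. fst x \<noteq> 0) L) i j"
proof (induction L arbitrary: i j)
  case Nil then show ?case by simp
next
  case (Cons x L)
  obtain c A where x: "x = (c, A)" by (cases x)
  show ?case
  proof (cases "c = 0")
    case True
    have "generic_mat_inv n (x # L) i j = mat_mul n (generic_mat_inv n L) mat_id i j"
      by (simp add: x True one_minus_mat_def) 
    also have "\<dots> = generic_mat_inv n L i j" using Cons by (simp add: mat_mul_id_right)
    finally show ?thesis using Cons True x by simp
  next
    case False
    then show ?thesis using Cons by (simp add: x) (intro mat_mul_cong, auto)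
  qed
qed

lemma generic_eval_filter: "generic_eval n L f = generic_eval n (filter (\<lambda>x. fst x \<noteq> 0) L) f"
proof -
  have "generic_val n L x = generic_val n (filter (\<lambda>x. fst x \<noteq> 0) L) x" for x
  proof (cases x)
    case (Gv i j) then show ?thesis using generic_mat_filter[of i n j L] by simp
  next
    case (Gbv i j) then show ?thesis using generic_mat_inv_filter[of i n j L] by simp
  qed
  then have "generic_val n L = generic_val n (filter (\<lambda>x. fst x \<noteq> 0) L)" by (rule ext)
  then show ?thesis unfolding generic_eval_def by simp
qed

lemma is_ring_hom_psubst_relabel: "is_ring_hom (psubst tconst (tvar_relabel S g))"
  by (rule is_ring_hom_psubst[OF is_ring_hom_tconst])

lemma psubst_relabel_tconst: "psubst tconst (tvar_relabel S g) (tconst c) = tconst c"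
  unfolding tconst_def by (rule psubst_const[OF is_ring_hom_tconst, unfolded tconst_def])

lemma psubst_relabel_tvar: "psubst tconst (tvar_relabel S g) (tvar p) = tvar_relabel S g p"
  unfolding tvar_def by (rule psubst_var[OF is_ring_hom_tconst])

lemma filter_zip_relabel:
  "filter (\<lambda>x. fst x \<noteq> 0) (zip (map (\<lambda>p. if p \<in> S then tvar p else (0::'k::comm_ring_1 tpoly)) [k..<k + length As]) As)
   = zip (map tvar (filter (\<lambda>p. p \<in> S) [k..<k + length As])) (nths As {i. i + k \<in> S})"
proof (induction As arbitrary: k)
  case Nil then show ?case by simp
next
  case (Cons A As)
  have u: "[k..<k + length (A # As)] = k # [Suc k..<Suc k + length As]"
    using upt_conv_Cons[of k "k + Suc (length As)"] by simp
  have s: "{j. Suc j \<in> {i. i + k \<in> S}} = {i. i + Suc k \<in> S}" by auto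
  show ?case
    unfolding u using Cons.IH[of "Suc k"]
    by (simp add: nths_Cons s tvar_nonzero)
qed

lemma inv_into_nth:
  assumes d: "distinct ps"
  defines "g \<equiv> inv_into {..<length ps} ((!) ps)"
  shows "map g ps = [0..<length ps]" "inj_on g (set ps)" "g ` set ps = {..<length ps}"
proof -
  have inj: "inj_on ((!) ps) {..<length ps}" using d by (simp add: inj_on_nth)
  have gi: "g (ps ! i) = i" if "i < length ps" for i
    unfolding g_def using inj that by (simp add: inv_into_f_f)
  show m: "map g ps = [0..<length ps]"
    by (rule nth_equalityI) (auto simp: gi)
  have "set ps = (!) ps ` {..<length ps}" by (auto simp: in_set_conv_nth)
  then show "inj_on g (set ps)" unfolding g_def by (simp add: inj_on_inv_into)
  show "g ` set ps = {..<length ps}"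
    using arg_cong[OF m, of set] by (simp add: atLeast0LessThan)
qed

lemma lookup_generic_eval_positions:
  assumes d: "distinct ps" and l: "length ps = length Bs"
  shows "Poly_Mapping.lookup (generic_eval n (zip (map tvar ps) Bs) f) (sqfree_mono (set ps)) = word_pairing n Bs f"
proof -
  define g where "g = inv_into {..<length ps} ((!) ps)"
  note gf = inv_into_nth[OF d, folded g_def]
  let ?h = "psubst tconst (tvar_relabel (set ps) g) :: 'a tpoly \<Rightarrow> 'a tpoly"
  have "Poly_Mapping.lookup (generic_eval n (zip (map tvar ps) Bs) f) (sqfree_mono (set ps))
      = Poly_Mapping.lookup (?h (generic_eval n (zip (map tvar ps) Bs) f)) (sqfree_mono (g ` set ps))"
    by (rule lookup_psubst_relabel[symmetric]) (auto simp: gf)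
  also have "?h (generic_eval n (zip (map tvar ps) Bs) f) = generic_eval n (zip (map (\<lambda>p. ?h (tvar p)) ps) Bs) f"
    by (simp add: generic_eval_map[OF is_ring_hom_psubst_relabel psubst_relabel_tconst] zip_map1[symmetric] comp_def)
  also have "map (\<lambda>p. ?h (tvar p)) ps = map tvar (map g ps)"
    by (simp add: psubst_relabel_tvar tvar_relabel_def)
  also have "\<dots> = map tvar [0..<length Bs]" using gf l by simp
  finally show ?thesis using gf l by (simp add: word_pairing_def tagged_def)
qed

text \<open>Substituting 0 for the variables outside S deletes the corresponding factors of G; the
  remaining variables are then renumbered consecutively.\<close>

lemma lookup_generic_eval_tagged:
  assumes S: "S \<subseteq> {..<length As}"
  shows "Poly_Mapping.lookup (generic_eval n (tagged As) f) (sqfree_mono S) = word_pairing n (nths As S) f"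
proof -
  have fS: "finite S" using S finite_subset by blast
  let ?h = "psubst tconst (tvar_relabel S id) :: 'a tpoly \<Rightarrow> 'a tpoly"
  let ?ps = "filter (\<lambda>p. p \<in> S) [0..<length As]"
  have "Poly_Mapping.lookup (generic_eval n (tagged As) f) (sqfree_mono S)
      = Poly_Mapping.lookup (?h (generic_eval n (tagged As) f)) (sqfree_mono (id ` S))"
    by (rule lookup_psubst_relabel[symmetric]) (auto simp: fS)
  also have "?h (generic_eval n (tagged As) f) = generic_eval n (zip (map (\<lambda>p. ?h (tvar p)) [0..<length As]) As) f"
    by (simp add: generic_eval_map[OF is_ring_hom_psubst_relabel psubst_relabel_tconst] zip_map1[symmetric] tagged_def comp_def id_def)
  also have "\<dots> = generic_eval n (filter (\<lambda>x. fst x \<noteq> 0) (zip (map (\<lambda>p. if p \<in> S then tvar p else 0) [0..<0 + length As]) As)) f"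
    by (subst generic_eval_filter) (simp add: psubst_relabel_tvar tvar_relabel_def id_def)
  also have "\<dots> = generic_eval n (zip (map tvar ?ps) (nths As S)) f"
    by (subst filter_zip_relabel) simp
  finally have e: "Poly_Mapping.lookup (generic_eval n (tagged As) f) (sqfree_mono S) = Poly_Mapping.lookup (generic_eval n (zip (map tvar ?ps) (nths As S)) f) (sqfree_mono S)"
    by simp
  have sp: "set ?ps = S" using S by auto
  have dp: "distinct ?ps" by simp
  have "length ?ps = card S" using distinct_card[OF dp] sp by simp
  moreover have "length (nths As S) = card S"
    using S by (simp add: length_nths) (metis (no_types, lifting) Collect_cong Collect_mem_eq lessThan_iff subset_eq)
  ultimately have "length ?ps = length (nths As S)" by simp
  then show ?thesis using e lookup_generic_eval_positions[OF dp, of "nths As S" n f] sp by simp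
qed

lemma word_pairing_mult:
  "word_pairing n As (f * g) = (\<Sum>S\<in>Pow {..<length As}. word_pairing n (nths As S) f * word_pairing n (nths As ({..<length As} - S)) g)"
proof -
  have "word_pairing n As (f * g) = Poly_Mapping.lookup (generic_eval n (tagged As) f * generic_eval n (tagged As) g) (sqfree_mono {..<length As})"
    by (simp add: word_pairing_def is_ring_hom_mult[OF is_ring_hom_generic_eval])
  also have "\<dots> = (\<Sum>S\<in>Pow {..<length As}. Poly_Mapping.lookup (generic_eval n (tagged As) f) (sqfree_mono S) *
        Poly_Mapping.lookup (generic_eval n (tagged As) g) (sqfree_mono ({..<length As} - S)))"
    by (rule lookup_mult_sqfree_mono) simp
  also have "\<dots> = (\<Sum>S\<in>Pow {..<length As}. word_pairing n (nths As S) f * word_pairing n (nths As ({..<length As} - S)) g)"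
    by (intro sum.cong refl) (auto simp: lookup_generic_eval_tagged)
  finally show ?thesis .
qed

lemma tvars_in_generic_mat:
  assumes "\<And>c A. (c, A) \<in> set L \<Longrightarrow> tvars_in V c"
  shows "tvars_in V (generic_mat n L i j)"
  using assms
proof (induction L arbitrary: i j)
  case Nil then show ?case
    by (simp add: mat_id_def tvars_in_def)
next
  case (Cons x L)
  obtain c A where x: "x = (c, A)" by (cases x)
  have c: "tvars_in V c" using Cons.prems x by auto
  have "tvars_in V (mat_mul n (one_plus_mat c A) (generic_mat n L) i j)"
    unfolding mat_mul_def one_plus_mat_def
    using Cons c by (intro tvars_in_sum tvars_in_mult tvars_in_add tvars_in_mat_id tvars_in_tconst) auto
  then show ?case by (simp add: x)
qed

lemma tvars_in_generic_mat_inv: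
  assumes "\<And>c A. (c, A) \<in> set L \<Longrightarrow> tvars_in V c"
  shows "tvars_in V (generic_mat_inv n L i j)"
  using assms
proof (induction L arbitrary: i j)
  case Nil then show ?case
    by (simp add: mat_id_def tvars_in_def)
next
  case (Cons x L)
  obtain c A where x: "x = (c, A)" by (cases x)
  have c: "tvars_in V c" using Cons.prems x by auto
  have "tvars_in V (mat_mul n (generic_mat_inv n L) (one_minus_mat c A) i j)"
    unfolding mat_mul_def one_minus_mat_def
    using Cons c by (intro tvars_in_sum tvars_in_mult tvars_in_diff tvars_in_mat_id tvars_in_tconst) auto
  then show ?case by (simp add: x)
qed

lemma tvars_in_generic_eval:
  assumes "\<And>c A. (c, A) \<in> set L \<Longrightarrow> tvars_in V c"
  shows "tvars_in V (generic_eval n L f)"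
proof -
  have "generic_eval n L f \<in> {F. tvars_in V F}"
    unfolding generic_eval_def
  proof (rule psubst_in_subring[OF is_subring_tvars_in])
    show "tconst c \<in> {F. tvars_in V F}" for c by (simp add: tvars_in_tconst)
    show "generic_val n L x \<in> {F. tvars_in V F}" for x
      by (cases x) (simp_all add: tvars_in_generic_mat[OF assms] tvars_in_generic_mat_inv[OF assms] del: generic_mat.simps generic_mat_inv.simps)
  qed
  then show ?thesis by simp
qed

lemma generic_eval_cvar_Suc: "generic_eval n L (Poly_Mapping.single (Poly_Mapping.single x (Suc 0)) 1) = generic_val n L x"
  using generic_eval_cvar[of n L x, unfolded cvar_def] by simp

definition generic_eval2 :: "nat \<Rightarrow> ('k::field tpoly \<times> (nat \<Rightarrow> nat \<Rightarrow> 'k)) list \<Rightarrow> ('k tpoly \<times> (nat \<Rightarrow> nat \<Rightarrow> 'k)) list \<Rightarrow> 'k coord2 \<Rightarrow> 'k tpoly" where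
  "generic_eval2 n L1 L2 = lin_extend tconst
     (\<lambda>m. generic_eval n L1 (Poly_Mapping.single (fst m) 1) * generic_eval n L2 (Poly_Mapping.single (snd m) 1))"

lemma is_ring_hom_generic_eval2: "is_ring_hom (generic_eval2 n L1 L2)"
  unfolding generic_eval2_def
proof (rule is_ring_hom_lin_extend[OF is_ring_hom_tconst])
  show "is_monoid_hom (\<lambda>m. generic_eval n L1 (Poly_Mapping.single (fst m) 1) * generic_eval n L2 (Poly_Mapping.single (snd m) 1))"
  proof -
    have "Poly_Mapping.single (a + b) (1::'a) = Poly_Mapping.single a 1 * Poly_Mapping.single b 1" for a b :: "gvar \<Rightarrow>\<^sub>0 nat"
      by (simp add: mult_single)
    then show ?thesis
      unfolding is_monoid_hom_def
      by (simp add: is_ring_hom_mult[OF is_ring_hom_generic_eval] is_ring_hom_one[OF is_ring_hom_generic_eval] mult_ac)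
  qed
qed

lemma generic_eval2_DeltaO_var: "generic_eval2 n L1 L2 (DeltaO_var n x) = generic_val n (L1 @ L2) x"
proof -
  note hom = is_ring_hom_sum[OF is_ring_hom_generic_eval2] is_ring_hom_mult[OF is_ring_hom_generic_eval2]
  have L: "generic_eval2 n L1 L2 (cvarL y) = generic_val n L1 y"
    and R: "generic_eval2 n L1 L2 (cvarR y) = generic_val n L2 y" for y
    by (simp_all add: generic_eval2_def cvarL_def cvarR_def lin_extend_single[OF is_ring_hom_tconst]
        generic_eval_cvar_Suc is_ring_hom_one[OF is_ring_hom_generic_eval])
  show ?thesis
  proof (cases x)
    case (Gv i j)
    then show ?thesis
      using generic_mat_append[of i n L1 L2 j]
      by (cases "i < n \<and> j < n") (auto simp: hom L R mat_mul_def simp del: generic_mat.simps)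
  next
    case (Gbv i j)
    then show ?thesis
      using generic_mat_inv_append[of j n L1 L2 i]
      by (cases "i < n \<and> j < n") (auto simp: hom L R mat_mul_def mult.commute simp del: generic_mat_inv.simps)
  qed
qed

lemma generic_eval_append: "generic_eval n (L1 @ L2) f = generic_eval2 n L1 L2 (DeltaO n f)"
proof -
  have "generic_eval2 n L1 L2 (Poly_Mapping.single 0 c) = tconst c" for c
    by (simp add: generic_eval2_def lin_extend_single[OF is_ring_hom_tconst] is_ring_hom_one[OF is_ring_hom_generic_eval])
  then show ?thesis
    unfolding DeltaO_def generic_eval_def
    by (subst psubst_comp[OF is_ring_hom_generic_eval2 is_ring_hom_single_0])
      (simp add: comp_def generic_eval2_DeltaO_var generic_eval_def tconst_def[symmetric])
qed

definition pair_coord2 :: "('k::field coord \<Rightarrow> 'k) \<Rightarrow> ('k coord \<Rightarrow> 'k) \<Rightarrow> 'k coord2 \<Rightarrow> 'k" where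
  "pair_coord2 \<alpha> \<beta> F = (\<Sum>m\<in>Poly_Mapping.keys F.
     Poly_Mapping.lookup F m * \<alpha> (Poly_Mapping.single (fst m) 1) * \<beta> (Poly_Mapping.single (snd m) 1))"

lemma word_pairing_append:
  "word_pairing n (As @ Bs) f = pair_coord2 (word_pairing n As) (word_pairing n Bs) (DeltaO n f)"
proof -
  define a where "a = length As"
  define b where "b = length Bs"
  define L2 where "L2 = (zip (map tvar [a..<a+b]) Bs :: ('a tpoly \<times> _) list)"
  have "tagged (As @ Bs) = tagged As @ L2"
    unfolding L2_def tagged_def a_def b_def by (simp add: upt_add_eq_append[of 0])
  moreover have "{..<a+b} = {..<a} \<union> {a..<a+b}" by auto
  ultimately have "word_pairing n (As @ Bs) f = Poly_Mapping.lookup (generic_eval2 n (tagged As) L2 (DeltaO n f)) (sqfree_mono ({..<a} \<union> {a..<a+b}))"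
    by (simp add: word_pairing_def generic_eval_append a_def b_def)
  also have "\<dots> = pair_coord2 (word_pairing n As) (word_pairing n Bs) (DeltaO n f)"
  proof -
    have "Poly_Mapping.lookup (generic_eval n (tagged As) (Poly_Mapping.single (fst m) 1) * generic_eval n L2 (Poly_Mapping.single (snd m) 1))
          (sqfree_mono ({..<a} \<union> {a..<a+b}))
        = word_pairing n As (Poly_Mapping.single (fst m) 1) * word_pairing n Bs (Poly_Mapping.single (snd m) 1)" for m
    proof (subst lookup_mult_sqfree_mono_disjoint)
      show "tvars_in {..<a} (generic_eval n (tagged As) (Poly_Mapping.single (fst m) 1))"
        by (rule tvars_in_generic_eval) (auto simp: tagged_def a_def set_zip tvars_in_tvar)
      show "tvars_in {a..<a+b} (generic_eval n L2 (Poly_Mapping.single (snd m) 1))"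
        by (rule tvars_in_generic_eval) (auto simp: L2_def set_zip tvars_in_tvar b_def)
      have "Poly_Mapping.lookup (generic_eval n L2 (Poly_Mapping.single (snd m) 1)) (sqfree_mono (set [a..<a+b]))
          = word_pairing n Bs (Poly_Mapping.single (snd m) 1)"
        unfolding L2_def by (rule lookup_generic_eval_positions) (simp_all add: b_def)
      then show "Poly_Mapping.lookup (generic_eval n (tagged As) (Poly_Mapping.single (fst m) 1)) (sqfree_mono {..<a}) *
          Poly_Mapping.lookup (generic_eval n L2 (Poly_Mapping.single (snd m) 1)) (sqfree_mono {a..<a+b})
        = word_pairing n As (Poly_Mapping.single (fst m) 1) * word_pairing n Bs (Poly_Mapping.single (snd m) 1)"
        by (simp add: word_pairing_def a_def)
    qed auto
    then show ?thesis
      by (simp add: generic_eval2_def lin_extend_def lookup_sum lookup_tconst_mult pair_coord2_def mult.assoc)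
  qed
  finally show ?thesis .
qed

lemma csmult_eq_cconst_mult: "csmult c f = cconst c * f"
  by (simp add: csmult_def cconst_def mult_map_scale_conv_mult)

lemma word_pairing_add: "word_pairing n As (f + g) = word_pairing n As f + word_pairing n As g"
  by (simp add: word_pairing_def is_ring_hom_add[OF is_ring_hom_generic_eval] lookup_add)

lemma word_pairing_cconst_mult: "word_pairing n As (cconst c * f) = c * word_pairing n As f"
  by (simp add: word_pairing_def is_ring_hom_mult[OF is_ring_hom_generic_eval] generic_eval_cconst lookup_tconst_mult)

lemma word_pairing_one: "word_pairing n As 1 = (if As = [] then 1 else 0)"
proof -
  have "sqfree_mono {..<length As} \<noteq> 0" if "As \<noteq> []"
    using that lookup_sqfree_mono[of "{..<length As}" 0] by auto
  then show ?thesis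
    by (auto simp: word_pairing_def is_ring_hom_one[OF is_ring_hom_generic_eval] lookup_one when_def)
qed

lemma word_pairing_Nil: "word_pairing n [] f = Poly_Mapping.lookup (generic_eval n [] f) 0"
  by (simp add: word_pairing_def tagged_def)

lemma word_pairing_Nil_eq_epsO:
  assumes f: "f \<in> coord_carrier n"
  shows "word_pairing n [] f = epsO f"
proof -
  let ?c = "\<lambda>F::'a tpoly. Poly_Mapping.lookup F 0"
  have "word_pairing n [] f = psubst (?c \<circ> tconst) (?c \<circ> generic_val n []) f"
    unfolding word_pairing_Nil generic_eval_def by (rule psubst_comp[OF is_ring_hom_lookup_0 is_ring_hom_tconst])
  also have "\<dots> = psubst id epsO_var f"
  proof -
    have "?c \<circ> tconst = id" by (simp add: fun_eq_iff tconst_def)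
    moreover have "psubst id (?c \<circ> generic_val n []) f = psubst id epsO_var f"
    proof (rule psubst_cong)
      fix m x assume "m \<in> Poly_Mapping.keys f" "x \<in> Poly_Mapping.keys m"
      then have "gidx_ok n x" using f by (auto simp: coord_carrier_def)
      then show "(?c \<circ> generic_val n []) x = epsO_var x"
        by (cases x) (auto simp: mat_id_def)
    qed
    ultimately show ?thesis by simp
  qed
  finally show ?thesis by (simp add: epsO_def)
qed

lemma word_pairing_single_cvar:
  "word_pairing n [A] (cvar (Gv i j)) = (if i < n \<and> j < n then A i j else 0)"
  "word_pairing n [A] (cvar (Gbv i j)) = (if i < n \<and> j < n then - A i j else 0)"
proof -
  let ?m = "Poly_Mapping.single (0::nat) (1::nat)"
  have w: "word_pairing n [A] f = Poly_Mapping.lookup (generic_eval n [(tvar 0, A)] f) ?m" for f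
    by (simp add: word_pairing_def tagged_def sqfree_mono_def)
  have "?m \<noteq> 0"
    by (metis lookup_single_eq lookup_zero one_neq_zero)
  then have id: "Poly_Mapping.lookup (mat_id i j :: 'a tpoly) ?m = 0" for i j
    by (simp add: mat_id_def lookup_one when_def)
  have t: "Poly_Mapping.lookup (tvar 0 * tconst c :: 'a tpoly) ?m = c" for c
    unfolding mult.commute[of "tvar 0"] lookup_tconst_mult by (simp add: tvar_def)
  show "word_pairing n [A] (cvar (Gv i j)) = (if i < n \<and> j < n then A i j else 0)"
    using id t by (simp add: w generic_eval_cvar one_plus_mat_def mat_mul_id_right lookup_add)
  show "word_pairing n [A] (cvar (Gbv i j)) = (if i < n \<and> j < n then - A i j else 0)"
    using id t by (simp add: w generic_eval_cvar one_minus_mat_def mat_mul_id_left lookup_minus)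
qed

lemma pair_coord2_superset:
  "finite A \<Longrightarrow> Poly_Mapping.keys F \<subseteq> A \<Longrightarrow>
   pair_coord2 \<alpha> \<beta> F = (\<Sum>m\<in>A. Poly_Mapping.lookup F m * \<alpha> (Poly_Mapping.single (fst m) 1) * \<beta> (Poly_Mapping.single (snd m) 1))"
  unfolding pair_coord2_def by (rule sum.mono_neutral_left) (auto simp: in_keys_iff)

lemma pair_coord2_add: "pair_coord2 \<alpha> \<beta> (F + G) = pair_coord2 \<alpha> \<beta> F + pair_coord2 \<alpha> \<beta> G"
proof -
  let ?A = "Poly_Mapping.keys F \<union> Poly_Mapping.keys G"
  have "pair_coord2 \<alpha> \<beta> (F + G) = (\<Sum>m\<in>?A. Poly_Mapping.lookup (F + G) m * \<alpha> (Poly_Mapping.single (fst m) 1) * \<beta> (Poly_Mapping.single (snd m) 1))"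
    using keys_add[of F G] by (intro pair_coord2_superset) auto
  also have "\<dots> = pair_coord2 \<alpha> \<beta> F + pair_coord2 \<alpha> \<beta> G"
    by (simp add: lookup_add distrib_right sum.distrib pair_coord2_superset[of ?A])
  finally show ?thesis .
qed

lemma pair_coord2_zero [simp]: "pair_coord2 \<alpha> \<beta> 0 = 0"
  by (simp add: pair_coord2_def)

lemma pair_coord2_sum: "pair_coord2 \<alpha> \<beta> (sum F A) = (\<Sum>a\<in>A. pair_coord2 \<alpha> \<beta> (F a))"
  by (induction A rule: infinite_finite_induct) (auto simp: pair_coord2_add)

lemma pair_coord2_cvarL_cvarR: "pair_coord2 \<alpha> \<beta> (cvarL x * cvarR y) = \<alpha> (cvar x) * \<beta> (cvar y)"
  by (simp add: cvarL_def cvarR_def mult_single pair_coord2_def cvar_def)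

lemma DeltaO_cvar: "DeltaO n (cvar x) = DeltaO_var n x"
  unfolding DeltaO_def cvar_def by (rule psubst_var[OF is_ring_hom_single_0])

lemma word_pairing_two_cvar:
  "word_pairing n [A, B] (cvar (Gv i j)) = (if i < n \<and> j < n then \<Sum>k<n. A i k * B k j else 0)"
  "word_pairing n [A, B] (cvar (Gbv i j)) = (if i < n \<and> j < n then \<Sum>k<n. B i k * A k j else 0)"
  using word_pairing_append[of n "[A]" "[B]"]
  by (auto simp: DeltaO_cvar pair_coord2_sum pair_coord2_cvarL_cvarR word_pairing_single_cvar mult.commute)

lemma word_pairing_single_mult:
  "word_pairing n [A] (f * g) = word_pairing n [A] f * word_pairing n [] g + word_pairing n [] f * word_pairing n [A] g"
proof -
  have "Pow {..<length [A]} = {{}, {0}}" by (auto simp: lessThan_Suc)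
  then show ?thesis by (simp add: word_pairing_mult lessThan_Suc add.commute)
qed

lemma word_pairing_two_mult:
  "word_pairing n [A, B] (f * g) = word_pairing n [] f * word_pairing n [A, B] g + word_pairing n [A] f * word_pairing n [B] g
     + word_pairing n [B] f * word_pairing n [A] g + word_pairing n [A, B] f * word_pairing n [] g"
proof -
  have l: "{..<length [A, B]} = {0, 1}" by auto
  have P: "Pow {0::nat, 1} = {{}, {0}, {1}, {0, 1}}" by (auto simp: Pow_insert)
  have d: "{0::nat, Suc 0} - {0} = {Suc 0}" "{0::nat, Suc 0} - {Suc 0} = {0}" "{0::nat, Suc 0} - {0, Suc 0} = {}" by auto
  have s: "nths [A, B] {0::nat, Suc 0} = [A, B]" "nths [A, B] {Suc 0} = [B]" "nths [A, B] {0} = [A]"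
    by (simp_all add: nths_Cons)
  show ?thesis unfolding word_pairing_mult l P
    by (simp add: d s algebra_simps)
qed

lemma derivation_vanishes:
  fixes D :: "'k::field coord \<Rightarrow> 'k"
  assumes add: "\<And>f g. D (f + g) = D f + D g"
    and mult: "\<And>f g. D (f * g) = D f * e g + e f * D g"
    and const: "\<And>c. D (cconst c) = 0" and var: "\<And>x. D (cvar x) = 0"
  shows "D h = 0"
proof -
  have "is_subring {h. D h = 0}"
    using const[of 0] const[of 1] by (simp add: is_subring_def cconst_def add mult)
  then show ?thesis
    using poly_in_subring[of "{h. D h = 0}" h] const var by (simp add: cconst_def cvar_def)
qed

lemma word_pairing_single_lin:
  "word_pairing n [\<lambda>i j. \<Sum>l<n. v l * A l i j] h = (\<Sum>l<n. v l * word_pairing n [A l] h)"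
proof -
  let ?D = "\<lambda>h. word_pairing n [\<lambda>i j. \<Sum>l<n. v l * A l i j] h - (\<Sum>l<n. v l * word_pairing n [A l] h)"
  have "?D h = 0"
  proof (rule derivation_vanishes[where e="word_pairing n []"])
    show "?D (f + g) = ?D f + ?D g" for f g
      by (simp add: word_pairing_add algebra_simps sum.distrib)
    show "?D (f * g) = ?D f * word_pairing n [] g + word_pairing n [] f * ?D g" for f g
      by (simp add: word_pairing_single_mult algebra_simps sum.distrib sum_distrib_left sum_distrib_right sum_subtractf)
    show "?D (cconst c) = 0" for c
      using word_pairing_cconst_mult[of n _ c 1] by (simp add: word_pairing_one)
    show "?D (cvar x) = 0" for x
      by (cases x) (auto simp: word_pairing_single_cvar sum_negf)
  qed
  then show ?thesis by simp
qed

section \<open>Derivations and the relations of O(Aut h)\<close>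

definition is_derivation :: "nat \<Rightarrow> (nat \<Rightarrow> nat \<Rightarrow> nat \<Rightarrow> 'k::comm_ring_1) \<Rightarrow> (nat \<Rightarrow> nat \<Rightarrow> 'k) \<Rightarrow> bool" where
  "is_derivation n C A \<longleftrightarrow> (\<forall>k<n. \<forall>l<n. \<forall>m<n.
     (\<Sum>s<n. A k s * C s l m) = (\<Sum>l'<n. C k l' m * A l' l) + (\<Sum>m'<n. C k l m' * A m' m))"

text \<open>The value of the first family of defining relations of O(Aut h) at a matrix M.\<close>

definition aut_defect :: "nat \<Rightarrow> (nat \<Rightarrow> nat \<Rightarrow> nat \<Rightarrow> 'k::comm_ring_1) \<Rightarrow> (nat \<Rightarrow> nat \<Rightarrow> 'k tpoly) \<Rightarrow> nat \<Rightarrow> nat \<Rightarrow> nat \<Rightarrow> 'k tpoly" where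
  "aut_defect n C M k i j = (\<Sum>l<n. \<Sum>m<n. tconst (C k l m) * M l i * M m j) - (\<Sum>r<n. M k r * tconst (C r i j))"

lemma aut_defect_mat_id:
  assumes "k < n" "i < n" "j < n"
  shows "aut_defect n C mat_id k i j = 0"
proof -
  have "(\<Sum>l<n. \<Sum>m<n. tconst (C k l m) * mat_id l i * mat_id m j) = (\<Sum>l<n. tconst (C k l j) * mat_id l i)"
    using assms by (intro sum.cong refl) (simp add: sum_mat_id_right)
  also have "\<dots> = tconst (C k i j)" using assms by (simp add: sum_mat_id_right)
  finally show ?thesis using assms by (simp add: aut_defect_def sum_mat_id_left)
qed

lemma aut_defect_derivation:
  fixes M :: "nat \<Rightarrow> nat \<Rightarrow> 'k::comm_ring_1 tpoly"
  assumes d: "is_derivation n C A" and k: "k < n"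
  defines "D \<equiv> mat_mul n (\<lambda>a b. tconst (A a b)) M"
  shows "(\<Sum>l<n. \<Sum>m<n. tconst (C k l m) * D l i * M m j) + (\<Sum>l<n. \<Sum>m<n. tconst (C k l m) * M l i * D m j)
         - (\<Sum>r<n. D k r * tconst (C r i j)) = (\<Sum>s<n. tconst (A k s) * aut_defect n C M s i j)"
proof -
  have e1: "(\<Sum>s<n. tconst (A k s) * (\<Sum>r<n. M s r * tconst (C r i j))) = (\<Sum>r<n. D k r * tconst (C r i j))"
    unfolding D_def mat_mul_def sum_distrib_left sum_distrib_right
    by (subst sum.swap) (simp add: mult.assoc)
  have "(\<Sum>s<n. tconst (A k s) * (\<Sum>l<n. \<Sum>m<n. tconst (C s l m) * M l i * M m j))
      = (\<Sum>s<n. \<Sum>l<n. \<Sum>m<n. tconst (A k s) * tconst (C s l m) * M l i * M m j)"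
    by (simp add: sum_distrib_left mult.assoc)
  also have "\<dots> = (\<Sum>l<n. \<Sum>m<n. \<Sum>s<n. tconst (A k s) * tconst (C s l m) * M l i * M m j)"
    by (rule sum_rotate3)
  also have "\<dots> = (\<Sum>l<n. \<Sum>m<n. tconst (\<Sum>s<n. A k s * C s l m) * M l i * M m j)"
    by (simp add: tconst_sum tconst_mult sum_distrib_right)
  also have "\<dots> = (\<Sum>l<n. \<Sum>m<n. \<Sum>l'<n. tconst (C k l' m) * tconst (A l' l) * M l i * M m j)
                  + (\<Sum>l<n. \<Sum>m<n. \<Sum>m'<n. tconst (C k l m') * tconst (A m' m) * M l i * M m j)"
    using d k by (simp add: is_derivation_def tconst_add tconst_sum tconst_mult distrib_right sum.distrib sum_distrib_right)
  also have "(\<Sum>l<n. \<Sum>m<n. \<Sum>l'<n. tconst (C k l' m) * tconst (A l' l) * M l i * M m j)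
      = (\<Sum>l<n. \<Sum>m<n. tconst (C k l m) * D l i * M m j)"
    by (subst sum_reverse3) (simp add: D_def mat_mul_def sum_distrib_left sum_distrib_right mult.assoc)
  also have "(\<Sum>l<n. \<Sum>m<n. \<Sum>m'<n. tconst (C k l m') * tconst (A m' m) * M l i * M m j)
      = (\<Sum>l<n. \<Sum>m<n. tconst (C k l m) * M l i * D m j)"
    by (subst sum_swap_inner) (simp add: D_def mat_mul_def sum_distrib_left sum_distrib_right mult_ac)
  finally show ?thesis
    unfolding aut_defect_def right_diff_distrib sum_subtractf e1 by simp
qed

lemma aut_defect_one_plus_mat:
  fixes M :: "nat \<Rightarrow> nat \<Rightarrow> 'k::comm_ring_1 tpoly"
  assumes d: "is_derivation n C A" and k: "k < n"
    and IH: "\<And>s. s < n \<Longrightarrow> aut_defect n C M s i j \<in> sqfree_null" and cc: "c * c \<in> sqfree_null"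
  shows "aut_defect n C (mat_mul n (one_plus_mat c A) M) k i j \<in> sqfree_null"
proof -
  define D where "D = mat_mul n (\<lambda>a b. tconst (A a b)) M"
  let ?M' = "mat_mul n (one_plus_mat c A) M"
  let ?T = "\<lambda>X Y. \<Sum>l<n. \<Sum>m<n. tconst (C k l m) * X l i * Y m j"
  have M': "?M' l x = M l x + c * D l x" if "l < n" for l x
    using that by (simp add: D_def mat_mul_def one_plus_mat_def distrib_right sum.distrib sum_mat_id_left
        sum_distrib_left mult.assoc)
  have "aut_defect n C ?M' k i j
      = aut_defect n C M k i j + c * (?T D M + ?T M D - (\<Sum>r<n. D k r * tconst (C r i j))) + c * c * ?T D D"
    using k by (simp add: aut_defect_def M' algebra_simps sum.distrib sum_subtractf sum_distrib_left)
  also have "?T D M + ?T M D - (\<Sum>r<n. D k r * tconst (C r i j)) = (\<Sum>s<n. tconst (A k s) * aut_defect n C M s i j)"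
    unfolding D_def by (rule aut_defect_derivation[OF d k])
  finally have "aut_defect n C ?M' k i j = aut_defect n C M k i j
      + c * (\<Sum>s<n. tconst (A k s) * aut_defect n C M s i j) + (c * c) * ?T D D" .
  moreover have "(\<Sum>s<n. tconst (A k s) * aut_defect n C M s i j) \<in> sqfree_null"
    by (intro sqfree_null_sum sqfree_null_mult_left IH) simp
  ultimately show ?thesis
    using IH[OF k] sqfree_null_mult_right[OF cc] by (simp add: sqfree_null_add sqfree_null_mult_left)
qed

lemma aut_defect_generic_mat:
  assumes "\<And>c A. (c, A) \<in> set L \<Longrightarrow> is_derivation n C A \<and> c * c \<in> sqfree_null"
    and "k < n" "i < n" "j < n"
  shows "aut_defect n C (generic_mat n L) k i j \<in> sqfree_null"
  using assms
proof (induction L arbitrary: k)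
  case Nil then show ?case by (simp add: aut_defect_mat_id)
next
  case (Cons x L)
  obtain c A where x: "x = (c, A)" by (cases x)
  have "aut_defect n C (mat_mul n (one_plus_mat c A) (generic_mat n L)) k i j \<in> sqfree_null"
    using Cons.prems(1)[of c A] by (intro aut_defect_one_plus_mat Cons.IH) (use Cons.prems x in auto)
  then show ?case by (simp add: x)
qed

definition mat_cong_null :: "nat \<Rightarrow> (nat \<Rightarrow> nat \<Rightarrow> 'k::comm_ring_1 tpoly) \<Rightarrow> (nat \<Rightarrow> nat \<Rightarrow> 'k tpoly) \<Rightarrow> bool" where
  "mat_cong_null n X Y \<longleftrightarrow> (\<forall>i<n. \<forall>j<n. X i j - Y i j \<in> sqfree_null)"

lemma mat_eq_on_imp_cong_null: "mat_eq_on n X Y \<Longrightarrow> mat_cong_null n X Y"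
  by (simp add: mat_eq_on_def mat_cong_null_def)

lemma mat_cong_null_trans [trans]: "mat_cong_null n X Y \<Longrightarrow> mat_cong_null n Y Z \<Longrightarrow> mat_cong_null n X Z"
  unfolding mat_cong_null_def using sqfree_null_add by fastforce

lemma mat_cong_null_mat_mul:
  assumes X: "mat_cong_null n X X'" and Y: "mat_cong_null n Y Y'"
  shows "mat_cong_null n (mat_mul n X Y) (mat_mul n X' Y')"
  unfolding mat_cong_null_def
proof (intro allI impI)
  fix i j assume "i < n" "j < n"
  then have "mat_mul n X Y i j - mat_mul n X' Y' i j = (\<Sum>k<n. (X i k - X' i k) * Y k j + X' i k * (Y k j - Y' k j))"
    by (simp add: mat_mul_def algebra_simps sum_subtractf)
  also have "\<dots> \<in> sqfree_null"
    using X Y \<open>i < n\<close> \<open>j < n\<close> unfolding mat_cong_null_def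
    by (intro sqfree_null_sum sqfree_null_add sqfree_null_mult_left sqfree_null_mult_right) auto
  finally show "mat_mul n X Y i j - mat_mul n X' Y' i j \<in> sqfree_null" .
qed

lemma mat_cong_null_one_plus_minus:
  assumes "c * c \<in> sqfree_null"
  shows "mat_cong_null n (mat_mul n (one_plus_mat c A) (one_minus_mat c A)) mat_id"
    and "mat_cong_null n (mat_mul n (one_minus_mat c A) (one_plus_mat c A)) mat_id"
proof -
  have "mat_mul n (one_plus_mat c A) (one_minus_mat c A) i j - mat_id i j = - (c * c * (\<Sum>k<n. tconst (A i k) * tconst (A k j)))"
    and "mat_mul n (one_minus_mat c A) (one_plus_mat c A) i j - mat_id i j = - (c * c * (\<Sum>k<n. tconst (A i k) * tconst (A k j)))"
    if "i < n" "j < n" for i j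
  proof -
    have "mat_mul n (one_plus_mat c A) (one_minus_mat c A) i j = (\<Sum>k<n. mat_id i k * (mat_id k j - c * tconst (A k j)))
        + (\<Sum>k<n. c * tconst (A i k) * mat_id k j) - (\<Sum>k<n. c * c * (tconst (A i k) * tconst (A k j)))"
      and "mat_mul n (one_minus_mat c A) (one_plus_mat c A) i j = (\<Sum>k<n. mat_id i k * (mat_id k j + c * tconst (A k j)))
        - (\<Sum>k<n. c * tconst (A i k) * mat_id k j) - (\<Sum>k<n. c * c * (tconst (A i k) * tconst (A k j)))"
      unfolding mat_mul_def one_plus_mat_def one_minus_mat_def by (simp_all add: algebra_simps sum.distrib sum_subtractf)
    then show "mat_mul n (one_plus_mat c A) (one_minus_mat c A) i j - mat_id i j = - (c * c * (\<Sum>k<n. tconst (A i k) * tconst (A k j)))"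
      and "mat_mul n (one_minus_mat c A) (one_plus_mat c A) i j - mat_id i j = - (c * c * (\<Sum>k<n. tconst (A i k) * tconst (A k j)))"
      using that by (simp_all add: sum_mat_id_left sum_mat_id_right sum_distrib_left)
  qed
  then show "mat_cong_null n (mat_mul n (one_plus_mat c A) (one_minus_mat c A)) mat_id"
    and "mat_cong_null n (mat_mul n (one_minus_mat c A) (one_plus_mat c A)) mat_id"
    using assms by (simp_all add: mat_cong_null_def sqfree_null_uminus sqfree_null_mult_right)
qed

lemma generic_mat_inv_cong_null:
  assumes "\<And>c A. (c, A) \<in> set L \<Longrightarrow> c * c \<in> sqfree_null"
  shows "mat_cong_null n (mat_mul n (generic_mat n L) (generic_mat_inv n L)) mat_id
       \<and> mat_cong_null n (mat_mul n (generic_mat_inv n L) (generic_mat n L)) mat_id"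
  using assms
proof (induction L)
  case Nil then show ?case by (simp add: mat_eq_on_imp_cong_null mat_eq_on_id_left)
next
  case (Cons x L)
  obtain c A where x: "x = (c, A)" by (cases x)
  have cc: "c * c \<in> sqfree_null" using Cons.prems x by auto
  have IH: "mat_cong_null n (mat_mul n (generic_mat n L) (generic_mat_inv n L)) mat_id"
    "mat_cong_null n (mat_mul n (generic_mat_inv n L) (generic_mat n L)) mat_id"
    using Cons by auto
  have refl: "mat_cong_null n X X" for X :: "nat \<Rightarrow> nat \<Rightarrow> 'a tpoly"
    by (simp add: mat_cong_null_def)
  have "mat_cong_null n (mat_mul n (one_plus_mat c A) (mat_mul n (mat_mul n (generic_mat n L) (generic_mat_inv n L)) (one_minus_mat c A)))
      (mat_mul n (one_plus_mat c A) (mat_mul n mat_id (one_minus_mat c A)))"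
    by (intro mat_cong_null_mat_mul refl IH)
  also have "mat_cong_null n \<dots> (mat_mul n (one_plus_mat c A) (one_minus_mat c A))"
    by (intro mat_cong_null_mat_mul refl mat_eq_on_imp_cong_null mat_eq_on_id_left)
  also have "mat_cong_null n \<dots> mat_id"
    by (rule mat_cong_null_one_plus_minus(1)[OF cc])
  moreover have "mat_cong_null n (mat_mul n (generic_mat_inv n L) (mat_mul n (mat_mul n (one_minus_mat c A) (one_plus_mat c A)) (generic_mat n L)))
      (mat_mul n (generic_mat_inv n L) (mat_mul n mat_id (generic_mat n L)))"
    by (intro mat_cong_null_mat_mul refl mat_cong_null_one_plus_minus(2)[OF cc])
  moreover have "mat_cong_null n \<dots> (mat_mul n (generic_mat_inv n L) (generic_mat n L))"
    by (intro mat_cong_null_mat_mul refl mat_eq_on_imp_cong_null mat_eq_on_id_left)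
  ultimately show ?case
    using IH(2) by (simp add: x mat_mul_assoc) (blast intro: mat_cong_null_trans)
qed

lemma generic_eval_O_rel:
  assumes s: "s \<in> O_rel n C" and L: "\<And>c A. (c, A) \<in> set L \<Longrightarrow> is_derivation n C A \<and> c * c \<in> sqfree_null"
  shows "generic_eval n L s \<in> sqfree_null"
proof -
  note ev = is_ring_hom_diff[OF is_ring_hom_generic_eval] is_ring_hom_sum[OF is_ring_hom_generic_eval]
    is_ring_hom_mult[OF is_ring_hom_generic_eval] generic_eval_cvar generic_eval_cconst
  note inv = generic_mat_inv_cong_null[of L n, unfolded mat_cong_null_def] L
  from s consider
    (aut) i j k where "i < n" "j < n" "k < n" "s = (\<Sum>l<n. \<Sum>m<n. cconst (C k l m) * cvar (Gv l i) * cvar (Gv m j))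
        - (\<Sum>r<n. cvar (Gv k r) * cconst (C r i j))"
  | (right_inv) i j where "i < n" "j < n" "s = (\<Sum>k<n. cvar (Gv i k) * cvar (Gbv k j)) - cconst (if i = j then 1 else 0)"
  | (left_inv) i j where "i < n" "j < n" "s = (\<Sum>k<n. cvar (Gbv i k) * cvar (Gv k j)) - cconst (if i = j then 1 else 0)"
    unfolding O_rel_def by blast
  then show ?thesis
  proof cases
    case aut
    then have "generic_eval n L s = aut_defect n C (generic_mat n L) k i j"
      by (simp add: ev aut_defect_def del: generic_mat.simps)
    then show ?thesis using aut_defect_generic_mat[OF L] aut by simp
  next
    case right_inv
    then have "generic_eval n L s = mat_mul n (generic_mat n L) (generic_mat_inv n L) i j - mat_id i j"
      by (simp add: ev mat_mul_def mat_id_def del: generic_mat.simps generic_mat_inv.simps)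
    then show ?thesis using inv right_inv by auto
  next
    case left_inv
    then have "generic_eval n L s = mat_mul n (generic_mat_inv n L) (generic_mat n L) i j - mat_id i j"
      by (simp add: ev mat_mul_def mat_id_def del: generic_mat.simps generic_mat_inv.simps)
    then show ?thesis using inv left_inv by auto
  qed
qed

lemma generic_eval_O_ideal:
  assumes f: "f \<in> O_ideal n C" and L: "\<And>c A. (c, A) \<in> set L \<Longrightarrow> is_derivation n C A \<and> c * c \<in> sqfree_null"
  shows "generic_eval n L f \<in> sqfree_null"
  using f unfolding O_ideal_def
proof (induction rule: cideal.induct)
  case zero then show ?case by (simp add: is_ring_hom_zero[OF is_ring_hom_generic_eval])
next
  case (gen s a) then show ?case
    by (simp add: is_ring_hom_mult[OF is_ring_hom_generic_eval] sqfree_null_mult_left generic_eval_O_rel L)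
next
  case (add f g) then show ?case by (simp add: is_ring_hom_add[OF is_ring_hom_generic_eval] sqfree_null_add)
qed

lemma word_pairing_O_ideal:
  assumes "f \<in> O_ideal n C" and "\<And>A. A \<in> set As \<Longrightarrow> is_derivation n C A"
  shows "word_pairing n As f = 0"
proof -
  have "(c, A) \<in> set (tagged As) \<Longrightarrow> is_derivation n C A \<and> c * c \<in> sqfree_null" for c A
    using assms(2) tvar_square_sqfree_null unfolding tagged_def by (auto simp: set_zip)
  then show ?thesis
    using generic_eval_O_ideal[OF assms(1)] by (simp add: word_pairing_def sqfree_null_def)
qed

section \<open>Right Leibniz algebras\<close>

definition unit_vec :: "nat \<Rightarrow> nat \<Rightarrow> 'k::comm_ring_1" where
  "unit_vec a = (\<lambda>i. if i = a then 1 else 0)"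

lemma brk_unit_vec_right: "b < n \<Longrightarrow> brk n C x (unit_vec b) i = (if i < n then \<Sum>j<n. x j * C i j b else 0)"
  by (simp add: brk_def unit_vec_def if_distrib[of "\<lambda>t. x _ * t * _"] cong: if_cong)

lemma brk_unit_vec_left: "a < n \<Longrightarrow> brk n C (unit_vec a) y i = (if i < n then \<Sum>k<n. y k * C i a k else 0)"
proof -
  have "(\<Sum>j<n. \<Sum>k<n. unit_vec a j * y k * C i j k) = (\<Sum>j<n. if j = a then (\<Sum>k<n. y k * C i j k) else 0)"
    by (intro sum.cong) (auto simp: unit_vec_def)
  then show "a < n \<Longrightarrow> ?thesis" by (simp add: brk_def)
qed

lemma brk_unit_vecs: "a < n \<Longrightarrow> b < n \<Longrightarrow> brk n C (unit_vec a) (unit_vec b) = (\<lambda>i. if i < n then C i a b else 0)"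
proof
  fix i assume "a < n" "b < n"
  then have "brk n C (unit_vec a) (unit_vec b) i = (if i < n then \<Sum>k<n. unit_vec b k * C i a k else 0)"
    by (intro brk_unit_vec_left)
  also have "\<dots> = (if i < n then C i a b else 0)"
    using \<open>b < n\<close> by (simp add: unit_vec_def if_distrib[of "\<lambda>t. t * _"] cong: if_cong)
  finally show "brk n C (unit_vec a) (unit_vec b) i = (if i < n then C i a b else 0)" .
qed

lemma brk_zero_left: "brk n C (\<lambda>_. 0) w = (\<lambda>_. 0)"
  by (simp add: brk_def fun_eq_iff)

lemma brk_zero_right: "brk n C w (\<lambda>_. 0) = (\<lambda>_. 0)"
  by (simp add: brk_def fun_eq_iff)

lemma brk_add_right: "brk n C w (\<lambda>i. v i + v' i) = (\<lambda>i. brk n C w v i + brk n C w v' i)"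
  by (simp add: fun_eq_iff brk_def algebra_simps sum.distrib)

lemma brk_smult_right: "brk n C w (\<lambda>i. c * v i) = (\<lambda>i. c * brk n C w v i)"
  by (simp add: fun_eq_iff brk_def algebra_simps sum_distrib_left)

lemma right_leibniz_coeffs:
  assumes RL: "right_leibniz n C" and "k < n" "l < n" "m < n" "z < n"
  shows "(\<Sum>s<n. C s l m * C k s z) = (\<Sum>s<n. C s l z * C k s m) + (\<Sum>s<n. C s m z * C k l s)"
proof -
  have trunc: "(\<Sum>j<n. (if j < n then f j else 0) * g j) = (\<Sum>j<n. f j * g j)" for f g :: "nat \<Rightarrow> 'a"
    by (intro sum.cong) auto
  have "brk n C (brk n C (unit_vec l) (unit_vec m)) (unit_vec z) k
      = brk n C (brk n C (unit_vec l) (unit_vec z)) (unit_vec m) k + brk n C (unit_vec l) (brk n C (unit_vec m) (unit_vec z)) k"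
    using RL unfolding right_leibniz_def by blast
  then show ?thesis
    using assms by (simp add: brk_unit_vecs brk_unit_vec_right brk_unit_vec_left trunc)
qed

text \<open>The matrix of x \<mapsto> -[x, y_k], i.e. the values of the pairing on y_k and the G^i_j
  prescribed by the normalisation.\<close>

definition neg_rmult_mat :: "nat \<Rightarrow> (nat \<Rightarrow> nat \<Rightarrow> nat \<Rightarrow> 'k::comm_ring_1) \<Rightarrow> nat \<Rightarrow> nat \<Rightarrow> nat \<Rightarrow> 'k" where
  "neg_rmult_mat n C k = (\<lambda>i j. if i < n \<and> j < n \<and> k < n then - C i j k else 0)"

lemma is_derivation_neg_rmult_mat:
  assumes RL: "right_leibniz n C"
  shows "is_derivation n C (neg_rmult_mat n C z)"
proof (cases "z < n")
  case False then show ?thesis by (simp add: is_derivation_def neg_rmult_mat_def)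
next
  case True
  show ?thesis unfolding is_derivation_def
  proof (intro allI impI)
    fix k l m assume k: "k < n" and l: "l < n" and m: "m < n"
    have "(\<Sum>s<n. neg_rmult_mat n C z k s * C s l m) = - (\<Sum>s<n. C s l m * C k s z)"
      and "(\<Sum>l'<n. C k l' m * neg_rmult_mat n C z l' l) = - (\<Sum>s<n. C s l z * C k s m)"
      and "(\<Sum>m'<n. C k l m' * neg_rmult_mat n C z m' m) = - (\<Sum>s<n. C s m z * C k l s)"
      using k l m True by (simp_all add: neg_rmult_mat_def sum_negf mult.commute)
    then show "(\<Sum>s<n. neg_rmult_mat n C z k s * C s l m)
        = (\<Sum>l'<n. C k l' m * neg_rmult_mat n C z l' l) + (\<Sum>m'<n. C k l m' * neg_rmult_mat n C z m' m)"
      using right_leibniz_coeffs[OF RL k l m True] by simp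
  qed
qed

lemma brk_leib_ideal_right:
  assumes RL: "right_leibniz n C" and v: "v \<in> leib_ideal n C"
  shows "brk n C w v = (\<lambda>_. 0)"
  using v
proof (induction arbitrary: w)
  case (sq x)
  have "brk n C (brk n C w x) x i = brk n C (brk n C w x) x i + brk n C w (brk n C x x) i" for i
    using RL unfolding right_leibniz_def by blast
  then show ?case by (simp add: fun_eq_iff)
next
  case zero then show ?case by (rule brk_zero_right)
next
  case (add v v') then show ?case by (simp add: brk_add_right)
next
  case (smult v c) then show ?case by (simp add: brk_smult_right)
next
  case (brk_left v x)
  have "brk n C (brk n C w x) v i = brk n C (brk n C w v) x i + brk n C w (brk n C x v) i" for i
    using RL unfolding right_leibniz_def by blast
  then show ?case using brk_left.IH by (simp add: fun_eq_iff brk_zero_left)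
next
  case (brk_right v x)
  have "brk n C (brk n C w v) x i = brk n C (brk n C w x) v i + brk n C w (brk n C v x) i" for i
    using RL unfolding right_leibniz_def by blast
  then show ?case using brk_right.IH by (simp add: fun_eq_iff brk_zero_left)
qed

lemma leib_ideal_coeff_sum:
  assumes "right_leibniz n C" and "v \<in> leib_ideal n C" and "i < n" "j < n"
  shows "(\<Sum>c<n. v c * C i j c) = 0"
  using fun_cong[OF brk_leib_ideal_right[OF assms(1,2), of "unit_vec j"], of i] assms(3,4)
  by (simp add: brk_unit_vec_left)

section \<open>The canonical pairing\<close>

definition canonical_pairing :: "nat \<Rightarrow> (nat \<Rightarrow> nat \<Rightarrow> nat \<Rightarrow> 'k::field) \<Rightarrow> 'k tens \<Rightarrow> 'k coord \<Rightarrow> 'k" where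
  "canonical_pairing n C u f = (\<Sum>w\<in>Poly_Mapping.keys u. Poly_Mapping.lookup u w * word_pairing n (map (neg_rmult_mat n C) w) f)"

lemma canonical_pairing_superset:
  "finite A \<Longrightarrow> Poly_Mapping.keys u \<subseteq> A \<Longrightarrow>
   canonical_pairing n C u f = (\<Sum>w\<in>A. Poly_Mapping.lookup u w * word_pairing n (map (neg_rmult_mat n C) w) f)"
  unfolding canonical_pairing_def by (rule sum.mono_neutral_left) (auto simp: in_keys_iff)

lemma canonical_pairing_add: "canonical_pairing n C (u + v) f = canonical_pairing n C u f + canonical_pairing n C v f"
proof -
  let ?A = "Poly_Mapping.keys u \<union> Poly_Mapping.keys v"
  have "canonical_pairing n C (u + v) f = (\<Sum>w\<in>?A. Poly_Mapping.lookup (u + v) w * word_pairing n (map (neg_rmult_mat n C) w) f)"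
    using keys_add[of u v] by (intro canonical_pairing_superset) auto
  also have "\<dots> = canonical_pairing n C u f + canonical_pairing n C v f"
    by (simp add: lookup_add distrib_right sum.distrib canonical_pairing_superset[of ?A])
  finally show ?thesis .
qed

lemma canonical_pairing_zero [simp]: "canonical_pairing n C 0 f = 0"
  by (simp add: canonical_pairing_def)

lemma canonical_pairing_diff: "canonical_pairing n C (u - v) f = canonical_pairing n C u f - canonical_pairing n C v f"
  using canonical_pairing_add[of n C "u - v" v f] by simp

lemma canonical_pairing_sum: "canonical_pairing n C (sum F A) f = (\<Sum>a\<in>A. canonical_pairing n C (F a) f)"
  by (induction A rule: infinite_finite_induct) (auto simp: canonical_pairing_add)

lemma canonical_pairing_single:
  "canonical_pairing n C (Poly_Mapping.single w c) f = c * word_pairing n (map (neg_rmult_mat n C) w) f"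
  by (simp add: canonical_pairing_def)

lemma canonical_pairing_tword: "canonical_pairing n C (tword w) f = word_pairing n (map (neg_rmult_mat n C) w) f"
  by (simp add: tword_def canonical_pairing_single)

lemma lookup_tsmult: "Poly_Mapping.lookup (tsmult c u) w = c * Poly_Mapping.lookup u w"
  by (simp add: tsmult_def Poly_Mapping.map.rep_eq when_def)

lemma keys_tsmult: "Poly_Mapping.keys (tsmult c u) \<subseteq> Poly_Mapping.keys u"
  by (auto simp: in_keys_iff lookup_tsmult)

lemma canonical_pairing_tsmult: "canonical_pairing n C (tsmult c u) f = c * canonical_pairing n C u f"
proof -
  have "canonical_pairing n C (tsmult c u) f
      = (\<Sum>w\<in>Poly_Mapping.keys u. Poly_Mapping.lookup (tsmult c u) w * word_pairing n (map (neg_rmult_mat n C) w) f)"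
    by (rule canonical_pairing_superset) (auto simp: keys_tsmult)
  then show ?thesis by (simp add: lookup_tsmult canonical_pairing_def sum_distrib_left mult.assoc)
qed

lemma canonical_pairing_add_right:
  "canonical_pairing n C u (f + g) = canonical_pairing n C u f + canonical_pairing n C u g"
  by (simp add: canonical_pairing_def word_pairing_add distrib_left sum.distrib)

lemma canonical_pairing_cconst_mult: "canonical_pairing n C u (cconst c * f) = c * canonical_pairing n C u f"
  by (simp add: canonical_pairing_def word_pairing_cconst_mult sum_distrib_left mult.left_commute)

lemma canonical_pairing_csmult: "canonical_pairing n C u (csmult c f) = c * canonical_pairing n C u f"
  by (simp add: csmult_eq_cconst_mult canonical_pairing_cconst_mult)

lemma canonical_pairing_one: "canonical_pairing n C u 1 = epsU u"
proof -
  have "canonical_pairing n C u 1 = (\<Sum>w\<in>Poly_Mapping.keys u. if w = [] then Poly_Mapping.lookup u w else 0)"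
    unfolding canonical_pairing_def by (intro sum.cong refl) (simp add: word_pairing_one)
  also have "\<dots> = epsU u" by (simp add: epsU_def in_keys_iff)
  finally show ?thesis .
qed

lemma canonical_pairing_cconst: "canonical_pairing n C u (cconst c) = c * epsU u"
  using canonical_pairing_cconst_mult[of n C u c 1] by (simp add: canonical_pairing_one)

lemma canonical_pairing_mult: "canonical_pairing n C u (f * g) = pair_DeltaU (canonical_pairing n C) u f g"
  unfolding pair_DeltaU_def canonical_pairing_tword
  by (simp add: canonical_pairing_def word_pairing_mult nths_map)

lemma canonical_pairing_tmul:
  "canonical_pairing n C (tmul u v) f = pair_tensor (canonical_pairing n C) u v (DeltaO n f)"
proof -
  let ?F = "DeltaO n f"
  let ?E = "\<lambda>w g. word_pairing n (map (neg_rmult_mat n C) w) g"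
  let ?l = "\<lambda>m. Poly_Mapping.single (fst m) 1" and ?r = "\<lambda>m. Poly_Mapping.single (snd m) 1"
  have "canonical_pairing n C (tmul u v) f = (\<Sum>a\<in>Poly_Mapping.keys u. \<Sum>b\<in>Poly_Mapping.keys v.
      Poly_Mapping.lookup u a * Poly_Mapping.lookup v b * ?E (a @ b) f)"
    by (simp add: tmul_def canonical_pairing_sum canonical_pairing_single)
  also have "\<dots> = (\<Sum>a\<in>Poly_Mapping.keys u. \<Sum>b\<in>Poly_Mapping.keys v. \<Sum>m\<in>Poly_Mapping.keys ?F.
      Poly_Mapping.lookup u a * Poly_Mapping.lookup v b * (Poly_Mapping.lookup ?F m * ?E a (?l m) * ?E b (?r m)))"
    by (simp add: word_pairing_append pair_coord2_def sum_distrib_left)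
  also have "\<dots> = (\<Sum>m\<in>Poly_Mapping.keys ?F. \<Sum>a\<in>Poly_Mapping.keys u. \<Sum>b\<in>Poly_Mapping.keys v.
      Poly_Mapping.lookup u a * Poly_Mapping.lookup v b * (Poly_Mapping.lookup ?F m * ?E a (?l m) * ?E b (?r m)))"
    by (subst sum_reverse3) (rule sum.swap)
  also have "\<dots> = pair_tensor (canonical_pairing n C) u v ?F"
    unfolding pair_tensor_def canonical_pairing_def
    by (intro sum.cong refl) (simp add: sum_distrib_left sum_distrib_right mult_ac)
  finally show ?thesis .
qed

lemma canonical_pairing_tlin: "canonical_pairing n C (tlin n v) h = (\<Sum>i<n. v i * word_pairing n [neg_rmult_mat n C i] h)"
  by (simp add: tlin_def canonical_pairing_sum canonical_pairing_single)

text \<open>The relations of U(h_Lie) are killed since the functionals they define are derivations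
  relative to the counit which vanish on the generators.\<close>

lemma canonical_pairing_commutator_rel:
  assumes RL: "right_leibniz n C" and a: "a < n" and b: "b < n"
  shows "canonical_pairing n C (tword [a, b] - tword [b, a] - tlin n (\<lambda>i. C i a b)) h = 0"
proof (rule derivation_vanishes[where e="word_pairing n []"])
  let ?s = "tword [a, b] - tword [b, a] - tlin n (\<lambda>i. C i a b)"
  let ?r = "neg_rmult_mat n C"
  have s: "canonical_pairing n C ?s f = word_pairing n [?r a, ?r b] f - word_pairing n [?r b, ?r a] f
      - (\<Sum>i<n. C i a b * word_pairing n [?r i] f)" for f
    by (simp add: canonical_pairing_diff canonical_pairing_tword canonical_pairing_tlin)
  show "canonical_pairing n C ?s (f + g) = canonical_pairing n C ?s f + canonical_pairing n C ?s g" for f g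
    by (rule canonical_pairing_add_right)
  show "canonical_pairing n C ?s (f * g)
      = canonical_pairing n C ?s f * word_pairing n [] g + word_pairing n [] f * canonical_pairing n C ?s g" for f g
    unfolding s word_pairing_single_mult word_pairing_two_mult
    by (simp add: algebra_simps sum.distrib sum_distrib_left sum_subtractf)
  show "canonical_pairing n C ?s (cconst c) = 0" for c
    by (simp add: canonical_pairing_cconst epsU_def tword_def tlin_def lookup_sum lookup_single lookup_minus)
  have "(\<Sum>k<n. ?r a i k * ?r b k j) = (\<Sum>s<n. C s j b * C i s a)"
    and "(\<Sum>k<n. ?r b i k * ?r a k j) = (\<Sum>s<n. C s j a * C i s b)"
    and "(\<Sum>c<n. C c a b * ?r c i j) = - (\<Sum>s<n. C s a b * C i j s)"
    if "i < n" "j < n" for i j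
    using that a b by (simp_all add: neg_rmult_mat_def sum_negf mult.commute)
  then show "canonical_pairing n C ?s (cvar x) = 0" for x
    using right_leibniz_coeffs[OF RL _ _ a b]
    by (cases x) (auto simp: s word_pairing_two_cvar word_pairing_single_cvar sum_negf)
qed

lemma canonical_pairing_tlin_leib_ideal:
  assumes RL: "right_leibniz n C" and v: "v \<in> leib_ideal n C"
  shows "canonical_pairing n C (tlin n v) h = 0"
proof (rule derivation_vanishes[where e="word_pairing n []"])
  show "canonical_pairing n C (tlin n v) (f * g)
      = canonical_pairing n C (tlin n v) f * word_pairing n [] g + word_pairing n [] f * canonical_pairing n C (tlin n v) g" for f g
    unfolding canonical_pairing_tlin word_pairing_single_mult
    by (simp add: algebra_simps sum.distrib sum_distrib_left sum_distrib_right)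
  have "(\<Sum>c<n. v c * neg_rmult_mat n C c i j) = - (\<Sum>c<n. v c * C i j c)" if "i < n" "j < n" for i j
    using that by (simp add: neg_rmult_mat_def sum_negf[symmetric])
  then have z: "(\<Sum>c<n. v c * neg_rmult_mat n C c i j) = 0" if "i < n" "j < n" for i j
    using leib_ideal_coeff_sum[OF RL v] that by simp
  show "canonical_pairing n C (tlin n v) (cvar x) = 0" for x
  proof (cases x)
    case (Gv i j) then show ?thesis
      using z[of i j] by (cases "i < n \<and> j < n") (auto simp: canonical_pairing_tlin word_pairing_single_cvar)
  next
    case (Gbv i j) then show ?thesis
      using z[of i j] by (cases "i < n \<and> j < n") (auto simp: canonical_pairing_tlin word_pairing_single_cvar sum_negf)
  qed
qed (simp_all add: canonical_pairing_add_right canonical_pairing_cconst epsU_def tlin_def lookup_sum lookup_single)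

lemma canonical_pairing_U_ideal:
  assumes RL: "right_leibniz n C" and u: "u \<in> U_ideal n C"
  shows "canonical_pairing n C u f = 0"
  using u unfolding U_ideal_def
proof (induction arbitrary: f rule: tideal.induct)
  case zero then show ?case by simp
next
  case (gen s a b)
  from gen(1) have "canonical_pairing n C s g = 0" for g
    using canonical_pairing_commutator_rel[OF RL] canonical_pairing_tlin_leib_ideal[OF RL] unfolding U_rel_def by blast
  then have "canonical_pairing n C (tmul a s) g = 0" for g
    by (simp add: canonical_pairing_tmul pair_tensor_def)
  then show ?case by (simp add: canonical_pairing_tmul pair_tensor_def)
next
  case (add u v) then show ?case by (simp add: canonical_pairing_add)
qed

lemma canonical_pairing_O_ideal:
  assumes "right_leibniz n C" and "f \<in> O_ideal n C"
  shows "canonical_pairing n C u f = 0"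
proof -
  have "word_pairing n (map (neg_rmult_mat n C) w) f = 0" for w
    using is_derivation_neg_rmult_mat[OF assms(1)] by (intro word_pairing_O_ideal[OF assms(2)]) auto
  then show ?thesis by (simp add: canonical_pairing_def)
qed

theorem canonical_pairing_hopf_pairing:
  assumes "right_leibniz n C"
  shows "hopf_pairing n C (canonical_pairing n C)"
  unfolding hopf_pairing_def
  by (simp add: canonical_pairing_add canonical_pairing_tsmult canonical_pairing_add_right canonical_pairing_csmult
      canonical_pairing_U_ideal[OF assms] canonical_pairing_O_ideal[OF assms]
      canonical_pairing_mult canonical_pairing_one canonical_pairing_tmul tone_def canonical_pairing_tword
      word_pairing_Nil_eq_epsO)

lemma canonical_pairing_normalized: "pairing_normalized n C (canonical_pairing n C)"
  unfolding pairing_normalized_def by (simp add: canonical_pairing_tword word_pairing_single_cvar neg_rmult_mat_def)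

section \<open>Uniqueness\<close>

lemma is_subring_coord_carrier: "is_subring (coord_carrier n :: 'k::field coord set)"
  unfolding coord_carrier_def
proof (rule is_subring_keys_closed)
  fix a b :: "gvar \<Rightarrow>\<^sub>0 nat"
  assume "\<forall>x\<in>Poly_Mapping.keys a. gidx_ok n x" "\<forall>x\<in>Poly_Mapping.keys b. gidx_ok n x"
  then show "\<forall>x\<in>Poly_Mapping.keys (a + b). gidx_ok n x" using keys_add[of a b] by blast
qed simp

lemma coord_carrier_add: "f \<in> coord_carrier n \<Longrightarrow> g \<in> coord_carrier n \<Longrightarrow> f + g \<in> coord_carrier n"
  using is_subring_coord_carrier unfolding is_subring_def by blast

lemma coord_carrier_mult: "f \<in> coord_carrier n \<Longrightarrow> g \<in> coord_carrier n \<Longrightarrow> f * g \<in> coord_carrier n"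
  using is_subring_coord_carrier unfolding is_subring_def by blast

lemma coord_carrier_zero: "0 \<in> coord_carrier n"
  by (simp add: coord_carrier_def)

lemma coord_carrier_cconst: "cconst c \<in> coord_carrier n"
  by (simp add: coord_carrier_def cconst_def)

lemma coord_carrier_cvar: "gidx_ok n x \<Longrightarrow> cvar x \<in> coord_carrier n"
  by (simp add: coord_carrier_def cvar_def)

lemma coord_carrier_uminus: "f \<in> coord_carrier n \<Longrightarrow> - f \<in> coord_carrier n"
  by (simp add: coord_carrier_def)

lemma coord_carrier_diff: "f \<in> coord_carrier n \<Longrightarrow> g \<in> coord_carrier n \<Longrightarrow> f - g \<in> coord_carrier n"
  using coord_carrier_add[of f n "- g"] coord_carrier_uminus[of g n] by simp

lemma coord_carrier_sum: "(\<And>a. a \<in> A \<Longrightarrow> F a \<in> coord_carrier n) \<Longrightarrow> sum F A \<in> coord_carrier n"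
  by (rule is_subring_sum[OF is_subring_coord_carrier])

lemma coord_carrier_induct [consumes 1, case_names const var add mult]:
  assumes f: "f \<in> coord_carrier n"
    and const: "\<And>c. Q (cconst c)" and var: "\<And>x. gidx_ok n x \<Longrightarrow> Q (cvar x)"
    and add: "\<And>f g. f \<in> coord_carrier n \<Longrightarrow> g \<in> coord_carrier n \<Longrightarrow> Q f \<Longrightarrow> Q g \<Longrightarrow> Q (f + g)"
    and mult: "\<And>f g. f \<in> coord_carrier n \<Longrightarrow> g \<in> coord_carrier n \<Longrightarrow> Q f \<Longrightarrow> Q g \<Longrightarrow> Q (f * g)"
  shows "Q f"
proof -
  have R: "is_subring {g \<in> coord_carrier n. Q g}"
    unfolding is_subring_def
  proof (intro conjI ballI)
    show "0 \<in> {g \<in> coord_carrier n. Q g}" "1 \<in> {g \<in> coord_carrier n. Q g}"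
      using const[of 0] const[of 1] coord_carrier_cconst[of 0 n] coord_carrier_cconst[of 1 n] by (simp_all add: cconst_def)
    fix x y assume "x \<in> {g \<in> coord_carrier n. Q g}" "y \<in> {g \<in> coord_carrier n. Q g}"
    then have x: "x \<in> coord_carrier n" "Q x" and y: "y \<in> coord_carrier n" "Q y" by auto
    show "x + y \<in> {g \<in> coord_carrier n. Q g}" "x * y \<in> {g \<in> coord_carrier n. Q g}"
      using add[OF x(1) y(1) x(2) y(2)] mult[OF x(1) y(1) x(2) y(2)]
        coord_carrier_add[OF x(1) y(1)] coord_carrier_mult[OF x(1) y(1)] by simp_all
  qed
  have "f \<in> {g \<in> coord_carrier n. Q g}"
  proof (rule poly_in_subring[OF R])
    show "Poly_Mapping.single 0 c \<in> {g \<in> coord_carrier n. Q g}" for c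
      using const[of c] coord_carrier_cconst[of c n] by (simp add: cconst_def)
    fix m x assume "m \<in> Poly_Mapping.keys f" "x \<in> Poly_Mapping.keys m"
    then have x: "gidx_ok n x" using f by (auto simp: coord_carrier_def)
    show "Poly_Mapping.single (Poly_Mapping.single x 1) 1 \<in> {g \<in> coord_carrier n. Q g}"
      using var[OF x] coord_carrier_cvar[OF x] by (simp add: cvar_def)
  qed
  then show ?thesis by simp
qed

definition coord2_carrier :: "nat \<Rightarrow> 'k::field coord2 set" where
  "coord2_carrier n = {F. \<forall>m\<in>Poly_Mapping.keys F.
     (\<forall>x\<in>Poly_Mapping.keys (fst m). gidx_ok n x) \<and> (\<forall>x\<in>Poly_Mapping.keys (snd m). gidx_ok n x)}"

lemma is_subring_coord2_carrier: "is_subring (coord2_carrier n)"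
  unfolding coord2_carrier_def
proof (rule is_subring_keys_closed)
  fix a b :: "(gvar \<Rightarrow>\<^sub>0 nat) \<times> (gvar \<Rightarrow>\<^sub>0 nat)"
  assume "(\<forall>x\<in>Poly_Mapping.keys (fst a). gidx_ok n x) \<and> (\<forall>x\<in>Poly_Mapping.keys (snd a). gidx_ok n x)"
    and "(\<forall>x\<in>Poly_Mapping.keys (fst b). gidx_ok n x) \<and> (\<forall>x\<in>Poly_Mapping.keys (snd b). gidx_ok n x)"
  then show "(\<forall>x\<in>Poly_Mapping.keys (fst (a + b)). gidx_ok n x) \<and> (\<forall>x\<in>Poly_Mapping.keys (snd (a + b)). gidx_ok n x)"
    using keys_add[of "fst a" "fst b"] keys_add[of "snd a" "snd b"] by auto
qed simp

lemma DeltaO_var_in_coord2_carrier: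
  assumes "gidx_ok n x"
  shows "DeltaO_var n x \<in> coord2_carrier n"
proof -
  have sum: "(\<Sum>k<n. cvarL (y k) * cvarR (z k)) \<in> coord2_carrier n"
    if "\<And>k. k < n \<Longrightarrow> gidx_ok n (y k) \<and> gidx_ok n (z k)" for y z
    using that by (intro is_subring_sum[OF is_subring_coord2_carrier])
      (simp add: cvarL_def cvarR_def mult_single coord2_carrier_def)
  show ?thesis
  proof (cases x)
    case (Gv i j) with assms show ?thesis using sum[of "\<lambda>k. Gv i k" "\<lambda>k. Gv k j"] by simp
  next
    case (Gbv i j) with assms show ?thesis using sum[of "\<lambda>k. Gbv k j" "\<lambda>k. Gbv i k"] by simp
  qed
qed

lemma DeltaO_in_coord2_carrier:
  assumes f: "f \<in> coord_carrier n"
  shows "DeltaO n f \<in> coord2_carrier n"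
  unfolding DeltaO_def
proof (rule psubst_in_subring[OF is_subring_coord2_carrier])
  show "Poly_Mapping.single 0 c \<in> coord2_carrier n" for c
    by (simp add: coord2_carrier_def)
  fix m x assume "m \<in> Poly_Mapping.keys f" "x \<in> Poly_Mapping.keys m"
  then have "gidx_ok n x" using f by (auto simp: coord_carrier_def)
  then show "DeltaO_var n x \<in> coord2_carrier n" by (rule DeltaO_var_in_coord2_carrier)
qed

lemma DeltaO_monomials_in_carrier:
  assumes "f \<in> coord_carrier n" and "m \<in> Poly_Mapping.keys (DeltaO n f)"
  shows "Poly_Mapping.single (fst m) 1 \<in> coord_carrier n" and "Poly_Mapping.single (snd m) 1 \<in> coord_carrier n"
  using DeltaO_in_coord2_carrier[OF assms(1)] assms(2) by (auto simp: coord2_carrier_def coord_carrier_def)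

lemma tens_carrier_tword: "set w \<subseteq> {..<n} \<Longrightarrow> tword w \<in> tens_carrier n"
  by (simp add: tens_carrier_def tword_def)

lemma tens_carrier_add: "u \<in> tens_carrier n \<Longrightarrow> v \<in> tens_carrier n \<Longrightarrow> u + v \<in> tens_carrier n"
  using keys_add[of u v] by (auto simp: tens_carrier_def)

lemma tens_carrier_zero: "0 \<in> tens_carrier n"
  by (simp add: tens_carrier_def)

lemma tens_carrier_tsmult: "u \<in> tens_carrier n \<Longrightarrow> tsmult c u \<in> tens_carrier n"
  using keys_tsmult[of c u] by (auto simp: tens_carrier_def)

lemma tens_carrier_sum: "(\<And>a. a \<in> A \<Longrightarrow> F a \<in> tens_carrier n) \<Longrightarrow> sum F A \<in> tens_carrier n"
  by (induction A rule: infinite_finite_induct) (auto simp: tens_carrier_add tens_carrier_zero)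

lemma tmul_tword: "tmul (tword a) (tword b) = tword (a @ b)"
  by (simp add: tmul_def tword_def)

lemma tens_eq_sum_tsmult_tword:
  fixes u :: "'k::field tens"
  shows "u = (\<Sum>w\<in>Poly_Mapping.keys u. tsmult (Poly_Mapping.lookup u w) (tword w))"
proof -
  have "tsmult c (tword w) = Poly_Mapping.single w c" for c :: 'k and w
    by (simp add: tsmult_def tword_def)
  then show ?thesis by (simp add: poly_mapping_sum_single)
qed

lemma epsO_cvar: "epsO (cvar x) = epsO_var x"
  unfolding epsO_def cvar_def by (rule psubst_var[OF is_ring_hom_id])

context
  fixes n :: nat and C :: "nat \<Rightarrow> nat \<Rightarrow> nat \<Rightarrow> 'k::field" and P :: "'k tens \<Rightarrow> 'k coord \<Rightarrow> 'k"
  assumes hopf: "hopf_pairing n C P"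
begin

lemma pairing_add_left:
  "u \<in> tens_carrier n \<Longrightarrow> v \<in> tens_carrier n \<Longrightarrow> f \<in> coord_carrier n \<Longrightarrow> P (u + v) f = P u f + P v f"
  using hopf by (simp add: hopf_pairing_def)

lemma pairing_tsmult: "u \<in> tens_carrier n \<Longrightarrow> f \<in> coord_carrier n \<Longrightarrow> P (tsmult c u) f = c * P u f"
  using hopf by (simp add: hopf_pairing_def)

lemma pairing_add_right:
  "u \<in> tens_carrier n \<Longrightarrow> f \<in> coord_carrier n \<Longrightarrow> g \<in> coord_carrier n \<Longrightarrow> P u (f + g) = P u f + P u g"
  using hopf by (simp add: hopf_pairing_def)

lemma pairing_csmult: "u \<in> tens_carrier n \<Longrightarrow> f \<in> coord_carrier n \<Longrightarrow> P u (csmult c f) = c * P u f"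
  using hopf by (simp add: hopf_pairing_def)

lemma pairing_O_ideal: "u \<in> tens_carrier n \<Longrightarrow> f \<in> O_ideal n C \<Longrightarrow> P u f = 0"
  using hopf by (simp add: hopf_pairing_def)

lemma pairing_mult:
  "u \<in> tens_carrier n \<Longrightarrow> f \<in> coord_carrier n \<Longrightarrow> g \<in> coord_carrier n \<Longrightarrow> P u (f * g) = pair_DeltaU P u f g"
  using hopf by (simp add: hopf_pairing_def)

lemma pairing_one: "u \<in> tens_carrier n \<Longrightarrow> P u 1 = epsU u"
  using hopf by (simp add: hopf_pairing_def)

lemma pairing_tmul:
  "u \<in> tens_carrier n \<Longrightarrow> v \<in> tens_carrier n \<Longrightarrow> f \<in> coord_carrier n \<Longrightarrow> P (tmul u v) f = pair_tensor P u v (DeltaO n f)"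
  using hopf by (simp add: hopf_pairing_def)

lemma pairing_tone: "f \<in> coord_carrier n \<Longrightarrow> P tone f = epsO f"
  using hopf by (simp add: hopf_pairing_def)

lemma pairing_zero_left: "f \<in> coord_carrier n \<Longrightarrow> P 0 f = 0"
  using pairing_add_left[OF tens_carrier_zero tens_carrier_zero] by (metis add_0 add_cancel_right_right)

lemma pairing_zero_right: "u \<in> tens_carrier n \<Longrightarrow> P u 0 = 0"
  using pairing_add_right[OF _ coord_carrier_zero coord_carrier_zero] by (metis add_0 add_cancel_right_right)

lemma pairing_diff_right:
  "u \<in> tens_carrier n \<Longrightarrow> f \<in> coord_carrier n \<Longrightarrow> g \<in> coord_carrier n \<Longrightarrow> P u (f - g) = P u f - P u g"
  using pairing_add_right[of u "f - g" g] coord_carrier_diff[of f n g] by simp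

lemma pairing_sum_left:
  assumes "\<And>a. a \<in> A \<Longrightarrow> F a \<in> tens_carrier n" and "f \<in> coord_carrier n"
  shows "P (sum F A) f = (\<Sum>a\<in>A. P (F a) f)"
  using assms
  by (induction A rule: infinite_finite_induct) (simp_all add: pairing_zero_left pairing_add_left tens_carrier_sum)

lemma pairing_sum_right:
  assumes "u \<in> tens_carrier n" and "\<And>a. a \<in> A \<Longrightarrow> F a \<in> coord_carrier n"
  shows "P u (sum F A) = (\<Sum>a\<in>A. P u (F a))"
  using assms
  by (induction A rule: infinite_finite_induct) (simp_all add: pairing_zero_right pairing_add_right coord_carrier_sum)

lemma pairing_cconst: "u \<in> tens_carrier n \<Longrightarrow> P u (cconst c) = c * epsU u"
  using pairing_csmult[of u 1 c] pairing_one[of u] coord_carrier_cconst[of 1 n]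
  by (simp add: csmult_eq_cconst_mult cconst_def)

lemma pairing_letter_mult:
  assumes k: "k < n" and f: "f \<in> coord_carrier n" and g: "g \<in> coord_carrier n"
  shows "P (tword [k]) (f * g) = P (tword [k]) f * epsO g + epsO f * P (tword [k]) g"
proof -
  have "Pow {..<length [k]} = {{}, {0}}" by (auto simp: lessThan_Suc)
  then have "pair_DeltaU P (tword [k]) f g = P (tword [k]) f * P tone g + P tone f * P (tword [k]) g"
    by (simp add: pair_DeltaU_def tword_def tone_def lessThan_Suc add.commute)
  then show ?thesis using k f g by (simp add: pairing_mult tens_carrier_tword pairing_tone)
qed

text \<open>The normalisation fixes the values on Gbar as well, through the relation G Gbar = 1.\<close>

lemma pairing_letter_Gbv:
  assumes norm: "pairing_normalized n C P" and k: "k < n" and i: "i < n" and j: "j < n"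
  shows "P (tword [k]) (cvar (Gbv i j)) = C i j k"
proof -
  let ?y = "tword [k]"
  let ?s = "(\<Sum>l<n. cvar (Gv i l) * cvar (Gbv l j)) - cconst (if i = j then 1 else (0::'k))"
  have y: "?y \<in> tens_carrier n" using k by (simp add: tens_carrier_tword)
  have cv: "cvar (Gv i l) * cvar (Gbv l j) \<in> coord_carrier n" if "l < n" for l
    using i j that by (intro coord_carrier_mult coord_carrier_cvar) auto
  have "?s \<in> O_rel n C" using i j unfolding O_rel_def by blast
  then have "1 * ?s \<in> O_ideal n C"
    unfolding O_ideal_def by (rule cideal.gen) (simp add: is_subring_coord_carrier[unfolded is_subring_def])
  then have "0 = P ?y ?s" using pairing_O_ideal[OF y] by simp
  also have "\<dots> = P ?y (\<Sum>l<n. cvar (Gv i l) * cvar (Gbv l j)) - P ?y (cconst (if i = j then 1 else 0))"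
    using cv by (intro pairing_diff_right[OF y] coord_carrier_sum coord_carrier_cconst) auto
  also have "P ?y (\<Sum>l<n. cvar (Gv i l) * cvar (Gbv l j)) = (\<Sum>l<n. P ?y (cvar (Gv i l) * cvar (Gbv l j)))"
    using cv by (intro pairing_sum_right[OF y]) auto
  also have "P ?y (cconst (if i = j then 1 else 0)) = 0"
    using pairing_cconst[OF y] by (simp add: epsU_def tword_def lookup_single)
  also have "(\<Sum>l<n. P ?y (cvar (Gv i l) * cvar (Gbv l j)))
      = (\<Sum>l<n. P ?y (cvar (Gv i l)) * mat_id l j + mat_id i l * P ?y (cvar (Gbv l j)))"
    using i j by (intro sum.cong refl) (simp add: pairing_letter_mult[OF k] coord_carrier_cvar epsO_cvar mat_id_def)
  also have "\<dots> = P ?y (cvar (Gv i j)) + P ?y (cvar (Gbv i j))"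
    using i j by (simp only: sum.distrib sum_mat_id_left sum_mat_id_right)
  finally show ?thesis
    using norm i j k by (simp add: pairing_normalized_def)
qed

end

lemma normalized_hopf_pairings_agree_letter:
  assumes H: "hopf_pairing n C P" "pairing_normalized n C P"
    and H': "hopf_pairing n C P'" "pairing_normalized n C P'"
    and k: "k < n" and f: "f \<in> coord_carrier n"
  shows "P (tword [k]) f = P' (tword [k]) f"
  using f
proof (induction rule: coord_carrier_induct)
  case (const c)
  show ?case using k by (simp add: pairing_cconst[OF H(1)] pairing_cconst[OF H'(1)] tens_carrier_tword)
next
  case (var x)
  then show ?case
    using H(2) H'(2) k pairing_letter_Gbv[OF H] pairing_letter_Gbv[OF H']
    by (cases x) (auto simp: pairing_normalized_def)
next
  case (add f g)
  then show ?case using k by (simp add: pairing_add_right[OF H(1)] pairing_add_right[OF H'(1)] tens_carrier_tword)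
next
  case (mult f g)
  then show ?case using k by (simp add: pairing_letter_mult[OF H(1)] pairing_letter_mult[OF H'(1)])
qed

lemma normalized_hopf_pairings_agree_word:
  assumes H: "hopf_pairing n C P" "pairing_normalized n C P"
    and H': "hopf_pairing n C P'" "pairing_normalized n C P'"
  shows "set w \<subseteq> {..<n} \<Longrightarrow> f \<in> coord_carrier n \<Longrightarrow> P (tword w) f = P' (tword w) f"
proof (induction w arbitrary: f)
  case Nil
  then show ?case by (simp add: pairing_tone[OF H(1), unfolded tone_def] pairing_tone[OF H'(1), unfolded tone_def])
next
  case (Cons k w)
  then have k: "k < n" and w: "set w \<subseteq> {..<n}" by auto
  have y: "tword [k] \<in> tens_carrier n" "tword w \<in> tens_carrier n"
    using k w by (simp_all add: tens_carrier_tword)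
  have e: "tword (k # w) = tmul (tword [k]) (tword w)" by (simp add: tmul_tword)
  have "P (tword (k # w)) f = pair_tensor P (tword [k]) (tword w) (DeltaO n f)"
    unfolding e using y Cons.prems(2) by (rule pairing_tmul[OF H(1)])
  also have "\<dots> = pair_tensor P' (tword [k]) (tword w) (DeltaO n f)"
    unfolding pair_tensor_def using Cons.prems(2)
    by (intro sum.cong refl) (simp add: DeltaO_monomials_in_carrier normalized_hopf_pairings_agree_letter[OF H H' k] Cons.IH[OF w])
  also have "\<dots> = P' (tword (k # w)) f"
    unfolding e using y Cons.prems(2) by (rule pairing_tmul[OF H'(1), symmetric])
  finally show ?case .
qed

theorem normalized_hopf_pairing_unique:
  assumes H: "hopf_pairing n C P" "pairing_normalized n C P"
    and H': "hopf_pairing n C P'" "pairing_normalized n C P'"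
    and u: "u \<in> tens_carrier n" and f: "f \<in> coord_carrier n"
  shows "P u f = P' u f"
proof -
  have w: "set w \<subseteq> {..<n}" if "w \<in> Poly_Mapping.keys u" for w
    using u that by (auto simp: tens_carrier_def)
  have "P u f = (\<Sum>w\<in>Poly_Mapping.keys u. P (tsmult (Poly_Mapping.lookup u w) (tword w)) f)"
    using f w by (subst tens_eq_sum_tsmult_tword) (simp add: pairing_sum_left[OF H(1)] tens_carrier_tsmult tens_carrier_tword)
  also have "\<dots> = (\<Sum>w\<in>Poly_Mapping.keys u. P' (tsmult (Poly_Mapping.lookup u w) (tword w)) f)"
    using f w by (intro sum.cong refl)
      (simp add: pairing_tsmult[OF H(1)] pairing_tsmult[OF H'(1)] tens_carrier_tword normalized_hopf_pairings_agree_word[OF H H'])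
  also have "\<dots> = P' u f"
    using f w by (subst (2) tens_eq_sum_tsmult_tword) (simp add: pairing_sum_left[OF H'(1)] tens_carrier_tsmult tens_carrier_tword)
  finally show ?thesis .
qed

section \<open>Change of basis\<close>

definition tconst_mat :: "(nat \<Rightarrow> nat \<Rightarrow> 'k::comm_ring_1) \<Rightarrow> nat \<Rightarrow> nat \<Rightarrow> 'k tpoly" where
  "tconst_mat Q = (\<lambda>i j. tconst (Q i j))"

definition scalar_mat_conj :: "nat \<Rightarrow> (nat \<Rightarrow> nat \<Rightarrow> 'k::comm_ring_1) \<Rightarrow> (nat \<Rightarrow> nat \<Rightarrow> 'k) \<Rightarrow> (nat \<Rightarrow> nat \<Rightarrow> 'k) \<Rightarrow> nat \<Rightarrow> nat \<Rightarrow> 'k" where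
  "scalar_mat_conj n Q Qi A = (\<lambda>i j. if i < n \<and> j < n then \<Sum>a<n. \<Sum>c<n. Qi i a * A a c * Q c j else 0)"

abbreviation conj_entries :: "nat \<Rightarrow> (nat \<Rightarrow> nat \<Rightarrow> 'k::comm_ring_1) \<Rightarrow> (nat \<Rightarrow> nat \<Rightarrow> 'k) \<Rightarrow> ('k tpoly \<times> (nat \<Rightarrow> nat \<Rightarrow> 'k)) list \<Rightarrow> ('k tpoly \<times> (nat \<Rightarrow> nat \<Rightarrow> 'k)) list" where
  "conj_entries n Q Qi L \<equiv> map (\<lambda>(c, A). (c, scalar_mat_conj n Q Qi A)) L"

lemma mat_conj_tconst_mat_expand:
  "mat_conj n (tconst_mat Q) (tconst_mat Qi) X i j = (\<Sum>a<n. \<Sum>c<n. tconst (Qi i a * Q c j) * X a c)"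
proof -
  have "mat_conj n (tconst_mat Q) (tconst_mat Qi) X i j = (\<Sum>c<n. \<Sum>a<n. tconst (Qi i a * Q c j) * X a c)"
    unfolding mat_conj_def mat_mul_def tconst_mat_def sum_distrib_right
    by (intro sum.cong refl) (simp add: tconst_mult mult_ac)
  also have "\<dots> = (\<Sum>a<n. \<Sum>c<n. tconst (Qi i a * Q c j) * X a c)"
    by (rule sum.swap)
  finally show ?thesis .
qed

lemma tconst_scalar_mat_conj:
  assumes "i < n" "j < n"
  shows "tconst (scalar_mat_conj n Q Qi A i j) = mat_conj n (tconst_mat Q) (tconst_mat Qi) (tconst_mat A) i j"
proof -
  have "(\<Sum>a<n. \<Sum>c<n. tconst (Qi i a * A a c * Q c j)) = (\<Sum>a<n. \<Sum>c<n. tconst (Qi i a * Q c j) * tconst_mat A a c)"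
    by (intro sum.cong refl) (simp add: tconst_mat_def tconst_mult[symmetric] mult_ac)
  then show ?thesis
    using assms by (simp add: mat_conj_tconst_mat_expand scalar_mat_conj_def tconst_sum)
qed

lemma mat_conj_add_smult:
  "mat_conj n P Pi (\<lambda>i j. X i j + c * Y i j) i j = mat_conj n P Pi X i j + c * mat_conj n P Pi Y i j"
  unfolding mat_conj_def mat_mul_def
  by (simp add: distrib_left distrib_right sum.distrib sum_distrib_left sum_distrib_right mult_ac)

lemma mat_conj_diff_smult:
  "mat_conj n P Pi (\<lambda>i j. X i j - c * Y i j) i j = mat_conj n P Pi X i j - c * mat_conj n P Pi Y i j"
  unfolding mat_conj_def mat_mul_def
  by (simp add: left_diff_distrib right_diff_distrib sum_subtractf sum_distrib_left sum_distrib_right mult_ac)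

context
  fixes n :: nat and Q Qi :: "nat \<Rightarrow> nat \<Rightarrow> 'k::field"
  assumes inv: "inverse_mats n Q Qi"
begin

lemma mat_eq_on_tconst_inverse:
  "mat_eq_on n (mat_mul n (tconst_mat Q) (tconst_mat Qi)) mat_id"
  "mat_eq_on n (mat_mul n (tconst_mat Qi) (tconst_mat Q)) mat_id"
  using inv unfolding mat_eq_on_def inverse_mats_def mat_mul_def tconst_mat_def
  by (auto simp: tconst_mult[symmetric] tconst_sum[symmetric] mat_id_def)

lemma mat_conj_one_plus_mat:
  "mat_eq_on n (mat_conj n (tconst_mat Q) (tconst_mat Qi) (one_plus_mat c A)) (one_plus_mat c (scalar_mat_conj n Q Qi A))"
proof -
  have "mat_conj n (tconst_mat Q) (tconst_mat Qi) (one_plus_mat c A) i j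
      = mat_conj n (tconst_mat Q) (tconst_mat Qi) mat_id i j + c * tconst (scalar_mat_conj n Q Qi A i j)"
    if "i < n" "j < n" for i j
    unfolding one_plus_mat_def mat_conj_add_smult using that by (simp add: tconst_scalar_mat_conj tconst_mat_def)
  then show ?thesis
    using mat_conj_id[OF mat_eq_on_tconst_inverse(2)] unfolding mat_eq_on_def one_plus_mat_def by simp
qed

lemma mat_conj_one_minus_mat:
  "mat_eq_on n (mat_conj n (tconst_mat Q) (tconst_mat Qi) (one_minus_mat c A)) (one_minus_mat c (scalar_mat_conj n Q Qi A))"
proof -
  have "mat_conj n (tconst_mat Q) (tconst_mat Qi) (one_minus_mat c A) i j
      = mat_conj n (tconst_mat Q) (tconst_mat Qi) mat_id i j - c * tconst (scalar_mat_conj n Q Qi A i j)"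
    if "i < n" "j < n" for i j
    unfolding one_minus_mat_def mat_conj_diff_smult using that by (simp add: tconst_scalar_mat_conj tconst_mat_def)
  then show ?thesis
    using mat_conj_id[OF mat_eq_on_tconst_inverse(2)] unfolding mat_eq_on_def one_minus_mat_def by simp
qed

lemma generic_mat_conj:
  "mat_eq_on n (generic_mat n (conj_entries n Q Qi L)) (mat_conj n (tconst_mat Q) (tconst_mat Qi) (generic_mat n L))"
proof (induction L)
  case Nil then show ?case using mat_conj_id[OF mat_eq_on_tconst_inverse(2)] by (simp add: mat_eq_on_sym)
next
  case (Cons x L)
  obtain c A where x: "x = (c, A)" by (cases x)
  have "mat_eq_on n (mat_mul n (one_plus_mat c (scalar_mat_conj n Q Qi A)) (generic_mat n (conj_entries n Q Qi L)))
      (mat_mul n (mat_conj n (tconst_mat Q) (tconst_mat Qi) (one_plus_mat c A)) (mat_conj n (tconst_mat Q) (tconst_mat Qi) (generic_mat n L)))"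
    by (intro mat_eq_on_mat_mul mat_eq_on_sym[OF mat_conj_one_plus_mat] Cons.IH)
  also have "mat_eq_on n \<dots> (mat_conj n (tconst_mat Q) (tconst_mat Qi) (mat_mul n (one_plus_mat c A) (generic_mat n L)))"
    by (rule mat_conj_mult[OF mat_eq_on_tconst_inverse(1)])
  finally show ?case by (simp add: x)
qed

lemma generic_mat_inv_conj:
  "mat_eq_on n (generic_mat_inv n (conj_entries n Q Qi L)) (mat_conj n (tconst_mat Q) (tconst_mat Qi) (generic_mat_inv n L))"
proof (induction L)
  case Nil then show ?case using mat_conj_id[OF mat_eq_on_tconst_inverse(2)] by (simp add: mat_eq_on_sym)
next
  case (Cons x L)
  obtain c A where x: "x = (c, A)" by (cases x)
  have "mat_eq_on n (mat_mul n (generic_mat_inv n (conj_entries n Q Qi L)) (one_minus_mat c (scalar_mat_conj n Q Qi A)))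
      (mat_mul n (mat_conj n (tconst_mat Q) (tconst_mat Qi) (generic_mat_inv n L)) (mat_conj n (tconst_mat Q) (tconst_mat Qi) (one_minus_mat c A)))"
    by (intro mat_eq_on_mat_mul mat_eq_on_sym[OF mat_conj_one_minus_mat] Cons.IH)
  also have "mat_eq_on n \<dots> (mat_conj n (tconst_mat Q) (tconst_mat Qi) (mat_mul n (generic_mat_inv n L) (one_minus_mat c A)))"
    by (rule mat_conj_mult[OF mat_eq_on_tconst_inverse(1)])
  finally show ?case by (simp add: x)
qed

lemma generic_eval_coord_change_var:
  assumes "gidx_ok n x"
  shows "generic_eval n L (coord_change_var n Q Qi x) = generic_val n (conj_entries n Q Qi L) x"
proof -
  note ev = is_ring_hom_sum[OF is_ring_hom_generic_eval] is_ring_hom_mult[OF is_ring_hom_generic_eval]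
    generic_eval_cvar generic_eval_cconst
  show ?thesis
  proof (cases x)
    case (Gv i j)
    with assms have "generic_eval n L (coord_change_var n Q Qi x) = mat_conj n (tconst_mat Q) (tconst_mat Qi) (generic_mat n L) i j"
      by (simp add: ev mat_conj_tconst_mat_expand del: generic_mat.simps)
    with Gv assms generic_mat_conj[of L] show ?thesis
      by (simp add: mat_eq_on_def del: generic_mat.simps)
  next
    case (Gbv i j)
    with assms have "generic_eval n L (coord_change_var n Q Qi x) = mat_conj n (tconst_mat Q) (tconst_mat Qi) (generic_mat_inv n L) i j"
      by (simp add: ev mat_conj_tconst_mat_expand del: generic_mat_inv.simps)
    with Gbv assms generic_mat_inv_conj[of L] show ?thesis
      by (simp add: mat_eq_on_def del: generic_mat_inv.simps)
  qed
qed

lemma generic_eval_coord_change: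
  assumes f: "f \<in> coord_carrier n"
  shows "generic_eval n L (coord_change n Q Qi f) = generic_eval n (conj_entries n Q Qi L) f"
proof -
  have "is_ring_hom (cconst :: 'k \<Rightarrow> 'k coord)"
    unfolding cconst_def[abs_def] by (rule is_ring_hom_single_0)
  then have "generic_eval n L (coord_change n Q Qi f)
      = psubst (generic_eval n L \<circ> cconst) (generic_eval n L \<circ> coord_change_var n Q Qi) f"
    unfolding coord_change_def by (rule psubst_comp[OF is_ring_hom_generic_eval])
  also have "generic_eval n L \<circ> cconst = tconst"
    by (simp add: fun_eq_iff generic_eval_cconst)
  also have "psubst tconst (generic_eval n L \<circ> coord_change_var n Q Qi) f = psubst tconst (generic_val n (conj_entries n Q Qi L)) f"
    using f by (intro psubst_cong) (auto simp: coord_carrier_def generic_eval_coord_change_var)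
  finally show ?thesis by (simp add: generic_eval_def)
qed

lemma word_pairing_coord_change:
  assumes "f \<in> coord_carrier n"
  shows "word_pairing n As (coord_change n Q Qi f) = word_pairing n (map (scalar_mat_conj n Q Qi) As) f"
proof -
  have "conj_entries n Q Qi (tagged As) = tagged (map (scalar_mat_conj n Q Qi) As)"
    by (simp add: tagged_def zip_map2)
  then show ?thesis by (simp add: word_pairing_def generic_eval_coord_change[OF assms])
qed

end

definition vec_change :: "nat \<Rightarrow> (nat \<Rightarrow> nat \<Rightarrow> 'k::comm_ring_1) \<Rightarrow> (nat \<Rightarrow> 'k) \<Rightarrow> nat \<Rightarrow> 'k" where
  "vec_change n Q x = (\<lambda>i. if i < n then \<Sum>j<n. Q i j * x j else 0)"

lemma sum_bilinear_basis_change: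
  fixes Q :: "nat \<Rightarrow> nat \<Rightarrow> 'k::field" and C :: "nat \<Rightarrow> nat \<Rightarrow> nat \<Rightarrow> 'k" and x y :: "nat \<Rightarrow> 'k"
  shows "(\<Sum>c<n. \<Sum>l<n. (\<Sum>a<n. Q c a * x a) * (\<Sum>b<n. Q l b * y b) * C i c l)
   = (\<Sum>a<n. \<Sum>b<n. x a * y b * (\<Sum>c<n. \<Sum>l<n. C i c l * Q c a * Q l b))"
  (is "?L = ?R")
proof -
  have e: "(\<Sum>a<n. Q c a * x a) * (\<Sum>b<n. Q l b * y b) * C i c l = (\<Sum>a<n. \<Sum>b<n. x a * y b * (C i c l * Q c a * Q l b))" for c l
  proof -
    have g: "(\<Sum>a<n. F a) * (\<Sum>b<n. G b) * K = (\<Sum>a<n. \<Sum>b<n. F a * G b * K)" for F G :: "nat \<Rightarrow> 'k" and K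
      by (simp add: sum_distrib_right sum_distrib_left mult.assoc) (rule sum.swap)
    show ?thesis unfolding g by (intro sum.cong refl) (simp add: mult_ac)
  qed
  have "?L = (\<Sum>c<n. \<Sum>l<n. \<Sum>a<n. \<Sum>b<n. x a * y b * (C i c l * Q c a * Q l b))"
    by (simp only: e)
  also have "\<dots> = (\<Sum>c<n. \<Sum>a<n. \<Sum>l<n. \<Sum>b<n. x a * y b * (C i c l * Q c a * Q l b))"
    by (rule sum_swap_inner)
  also have "\<dots> = (\<Sum>a<n. \<Sum>c<n. \<Sum>l<n. \<Sum>b<n. x a * y b * (C i c l * Q c a * Q l b))"
    by (rule sum.swap)
  also have "\<dots> = (\<Sum>a<n. \<Sum>c<n. \<Sum>b<n. \<Sum>l<n. x a * y b * (C i c l * Q c a * Q l b))"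
    by (rule sum.cong[OF refl], rule sum.cong[OF refl], rule sum.swap)
  also have "\<dots> = (\<Sum>a<n. \<Sum>b<n. \<Sum>c<n. \<Sum>l<n. x a * y b * (C i c l * Q c a * Q l b))"
    by (rule sum.cong[OF refl], rule sum.swap)
  also have "\<dots> = ?R"
    by (simp add: sum_distrib_left)
  finally show ?thesis .
qed

context
  fixes n :: nat and Q Qi :: "nat \<Rightarrow> nat \<Rightarrow> 'k::field" and C :: "nat \<Rightarrow> nat \<Rightarrow> nat \<Rightarrow> 'k"
  assumes inv: "inverse_mats n Q Qi"
begin

lemma inverse_mats_right: "i < n \<Longrightarrow> j < n \<Longrightarrow> (\<Sum>k<n. Q i k * Qi k j) = mat_id i j"
  using inv by (simp add: inverse_mats_def mat_id_def)
lemma inverse_mats_left: "i < n \<Longrightarrow> j < n \<Longrightarrow> (\<Sum>k<n. Qi i k * Q k j) = mat_id i j"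
  using inv by (simp add: inverse_mats_def mat_id_def)

lemma sum_mult_basis_change_C:
  assumes i: "i < n"
  shows "(\<Sum>j<n. Q i j * basis_change_C n Q Qi C j a b) = (\<Sum>c<n. \<Sum>l<n. C i c l * Q c a * Q l b)"
proof -
  define D where "D p = (\<Sum>c<n. \<Sum>l<n. C p c l * Q c a * Q l b)" for p
  have "(\<Sum>j<n. Q i j * basis_change_C n Q Qi C j a b) = (\<Sum>j<n. \<Sum>p<n. Q i j * Qi j p * D p)"
    unfolding basis_change_C_def D_def by (simp add: sum_distrib_left mult_ac)
  also have "\<dots> = (\<Sum>p<n. mat_id i p * D p)"
    using i by (subst sum.swap) (simp add: sum_distrib_right[symmetric] inverse_mats_right)
  also have "\<dots> = D i"
    using i by (rule sum_mat_id_left)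
  finally show ?thesis unfolding D_def .
qed

lemma vec_change_brk:
  "vec_change n Q (brk n (basis_change_C n Q Qi C) x y) = brk n C (vec_change n Q x) (vec_change n Q y)"
proof
  fix i
  show "vec_change n Q (brk n (basis_change_C n Q Qi C) x y) i = brk n C (vec_change n Q x) (vec_change n Q y) i"
  proof (cases "i < n")
    case False then show ?thesis by (simp add: vec_change_def brk_def)
  next
    case True
    have "vec_change n Q (brk n (basis_change_C n Q Qi C) x y) i
        = (\<Sum>j<n. \<Sum>a<n. \<Sum>b<n. x a * y b * (Q i j * basis_change_C n Q Qi C j a b))"
      using True by (simp add: vec_change_def brk_def sum_distrib_left mult_ac)
    also have "\<dots> = (\<Sum>a<n. \<Sum>b<n. x a * y b * (\<Sum>j<n. Q i j * basis_change_C n Q Qi C j a b))"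
      by (subst sum_rotate3) (simp add: sum_distrib_left)
    also have "\<dots> = brk n C (vec_change n Q x) (vec_change n Q y) i"
      using True by (simp add: sum_mult_basis_change_C brk_def vec_change_def sum_bilinear_basis_change)
    finally show ?thesis .
  qed
qed

lemma sum_inverse_vec_change: "i < n \<Longrightarrow> (\<Sum>k<n. Qi i k * vec_change n Q v k) = v i"
proof -
  assume i: "i < n"
  have "(\<Sum>k<n. Qi i k * vec_change n Q v k) = (\<Sum>k<n. \<Sum>j<n. Qi i k * Q k j * v j)"
    by (simp add: vec_change_def sum_distrib_left mult.assoc)
  also have "\<dots> = (\<Sum>j<n. \<Sum>k<n. Qi i k * Q k j * v j)" by (rule sum.swap)
  also have "\<dots> = (\<Sum>j<n. mat_id i j * v j)"
    using i by (intro sum.cong refl) (simp add: sum_distrib_right[symmetric] inverse_mats_left)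
  also have "\<dots> = v i" using i by (rule sum_mat_id_left)
  finally show ?thesis .
qed

lemma vec_change_add: "vec_change n Q (\<lambda>i. v i + w i) = (\<lambda>i. vec_change n Q v i + vec_change n Q w i)"
  by (simp add: vec_change_def fun_eq_iff distrib_left sum.distrib)

lemma right_leibniz_basis_change:
  assumes RL: "right_leibniz n C"
  shows "right_leibniz n (basis_change_C n Q Qi C)"
  unfolding right_leibniz_def
proof (intro allI)
  fix x y z i
  let ?C' = "basis_change_C n Q Qi C"
  let ?b = "brk n ?C'"
  show "?b (?b x y) z i = ?b (?b x z) y i + ?b x (?b y z) i"
  proof (cases "i < n")
    case False then show ?thesis by (simp add: brk_def)
  next
    case True
    have "vec_change n Q (?b (?b x y) z) = vec_change n Q (\<lambda>i. ?b (?b x z) y i + ?b x (?b y z) i)"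
      unfolding vec_change_add vec_change_brk
      using RL unfolding right_leibniz_def fun_eq_iff by blast
    then have "(\<Sum>k<n. Qi i k * vec_change n Q (?b (?b x y) z) k) = (\<Sum>k<n. Qi i k * vec_change n Q (\<lambda>i. ?b (?b x z) y i + ?b x (?b y z) i) k)"
      by simp
    then show ?thesis using True by (simp only: sum_inverse_vec_change)
  qed
qed

end

definition neg_rmult_mat_lin :: "nat \<Rightarrow> (nat \<Rightarrow> nat \<Rightarrow> nat \<Rightarrow> 'k::comm_ring_1) \<Rightarrow> (nat \<Rightarrow> 'k) \<Rightarrow> nat \<Rightarrow> nat \<Rightarrow> 'k" where
  "neg_rmult_mat_lin n C v = (\<lambda>i j. \<Sum>l<n. v l * neg_rmult_mat n C l i j)"

lemma neg_rmult_mat_basis_change: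
  assumes k: "k < n"
  shows "neg_rmult_mat n (basis_change_C n Q Qi C) k = scalar_mat_conj n Q Qi (neg_rmult_mat_lin n C (\<lambda>l. Q l k))"
proof (intro ext)
  fix i j
  show "neg_rmult_mat n (basis_change_C n Q Qi C) k i j = scalar_mat_conj n Q Qi (neg_rmult_mat_lin n C (\<lambda>l. Q l k)) i j"
  proof (cases "i < n \<and> j < n")
    case False then show ?thesis by (auto simp: neg_rmult_mat_def scalar_mat_conj_def)
  next
    case True
    have inner: "Qi i a * neg_rmult_mat_lin n C (\<lambda>l. Q l k) a c * Q c j = (\<Sum>l<n. - (Qi i a * C a c l * Q c j * Q l k))"
      if "a < n" "c < n" for a c
    proof -
      have "neg_rmult_mat_lin n C (\<lambda>l. Q l k) a c = (\<Sum>l<n. - (Q l k * C a c l))"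
        unfolding neg_rmult_mat_lin_def using that by (intro sum.cong refl) (simp add: neg_rmult_mat_def)
      then show ?thesis by (simp add: sum_distrib_left sum_distrib_right mult_ac)
    qed
    have "scalar_mat_conj n Q Qi (neg_rmult_mat_lin n C (\<lambda>l. Q l k)) i j = (\<Sum>a<n. \<Sum>c<n. \<Sum>l<n. - (Qi i a * C a c l * Q c j * Q l k))"
      unfolding scalar_mat_conj_def using True by (simp add: inner)
    also have "\<dots> = neg_rmult_mat n (basis_change_C n Q Qi C) k i j"
      using True k by (simp add: neg_rmult_mat_def basis_change_C_def sum_negf)
    finally show ?thesis by simp
  qed
qed

lemma canonical_pairing_tlin_eq: "canonical_pairing n C (tlin n v) h = word_pairing n [neg_rmult_mat_lin n C v] h"
  by (simp add: canonical_pairing_tlin neg_rmult_mat_lin_def word_pairing_single_lin)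

lemma canonical_pairing_tlist_prod:
  "canonical_pairing n C (tlist_prod (map (tlin n) vs)) h = word_pairing n (map (neg_rmult_mat_lin n C) vs) h"
proof (induction vs arbitrary: h)
  case Nil
  then show ?case by (simp add: tlist_prod_def tone_def canonical_pairing_tword)
next
  case (Cons v vs)
  have "canonical_pairing n C (tlist_prod (map (tlin n) (v # vs))) h
      = pair_coord2 (word_pairing n [neg_rmult_mat_lin n C v]) (word_pairing n (map (neg_rmult_mat_lin n C) vs)) (DeltaO n h)"
    unfolding list.map(2) tlist_prod_def[of "_ # _"] foldr_Cons o_apply tlist_prod_def[symmetric]
    by (simp only: canonical_pairing_tmul pair_tensor_def canonical_pairing_tlin_eq Cons.IH pair_coord2_def)
  also have "\<dots> = word_pairing n ([neg_rmult_mat_lin n C v] @ map (neg_rmult_mat_lin n C) vs) h"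
    by (rule word_pairing_append[symmetric])
  finally show ?case by simp
qed

lemma tens_carrier_single: "set w \<subseteq> {..<n} \<Longrightarrow> Poly_Mapping.single w c \<in> tens_carrier n"
  by (simp add: tens_carrier_def)

lemma tens_carrier_tmul: "u \<in> tens_carrier n \<Longrightarrow> v \<in> tens_carrier n \<Longrightarrow> tmul u v \<in> tens_carrier n"
  unfolding tmul_def
  by (intro tens_carrier_sum tens_carrier_single) (auto simp: tens_carrier_def)

lemma tens_carrier_tlin: "tlin n v \<in> tens_carrier n"
  unfolding tlin_def by (intro tens_carrier_sum tens_carrier_single) auto

lemma tens_carrier_tlist: "(\<And>x. x \<in> set xs \<Longrightarrow> x \<in> tens_carrier n) \<Longrightarrow> tlist_prod xs \<in> tens_carrier n"
  by (induction xs) (auto simp: tlist_prod_def tone_def tens_carrier_tword tens_carrier_tmul)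

lemma tens_carrier_change: "tens_change n Q u \<in> tens_carrier n"
  unfolding tens_change_def
  by (intro tens_carrier_sum tens_carrier_tsmult tens_carrier_tlist) (auto simp: tens_carrier_tlin)

lemma coord_carrier_change:
  assumes f: "f \<in> coord_carrier n"
  shows "coord_change n Q Qi f \<in> coord_carrier n"
  unfolding coord_change_def
proof (rule psubst_in_subring[OF is_subring_coord_carrier])
  fix c show "cconst c \<in> coord_carrier n" by (rule coord_carrier_cconst)
next
  fix m x
  show "coord_change_var n Q Qi x \<in> coord_carrier n"
    by (cases x) (auto intro!: coord_carrier_sum coord_carrier_mult coord_carrier_cconst coord_carrier_cvar)
qed

lemma canonical_pairing_basis_change:
  assumes inv: "inverse_mats n Q Qi" and u: "u \<in> tens_carrier n" and f: "f \<in> coord_carrier n"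
  shows "canonical_pairing n (basis_change_C n Q Qi C) u f = canonical_pairing n C (tens_change n Q u) (coord_change n Q Qi f)"
proof -
  have "canonical_pairing n C (tens_change n Q u) (coord_change n Q Qi f)
      = (\<Sum>w\<in>Poly_Mapping.keys u. Poly_Mapping.lookup u w *
          word_pairing n (map (scalar_mat_conj n Q Qi) (map (neg_rmult_mat_lin n C) (map (\<lambda>j i. Q i j) w))) f)"
  proof -
    have m: "tlist_prod (map (\<lambda>j. tlin n (\<lambda>i. Q i j)) w) = tlist_prod (map (tlin n) (map (\<lambda>j i. Q i j) w))" for w
      by (simp add: comp_def)
    show ?thesis
      by (simp only: tens_change_def canonical_pairing_sum canonical_pairing_tsmult m canonical_pairing_tlist_prod word_pairing_coord_change[OF inv f])
  qed
  also have "\<dots> = (\<Sum>w\<in>Poly_Mapping.keys u. Poly_Mapping.lookup u w * word_pairing n (map (neg_rmult_mat n (basis_change_C n Q Qi C)) w) f)"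
  proof (intro sum.cong refl arg_cong2[where f="(*)"] arg_cong2[where f="word_pairing n"])
    fix w assume "w \<in> Poly_Mapping.keys u"
    then have "set w \<subseteq> {..<n}" using u by (auto simp: tens_carrier_def)
    then show "map (scalar_mat_conj n Q Qi) (map (neg_rmult_mat_lin n C) (map (\<lambda>j i. Q i j) w)) = map (neg_rmult_mat n (basis_change_C n Q Qi C)) w"
      by (auto simp: neg_rmult_mat_basis_change)
  qed
  finally show ?thesis by (simp add: canonical_pairing_def)
qed

lemma normalized_hopf_pairing_basis_change:
  assumes RL: "right_leibniz n C" and inv: "inverse_mats n Q Qi"
    and P: "hopf_pairing n C P" "pairing_normalized n C P"
    and P': "hopf_pairing n (basis_change_C n Q Qi C) P'" "pairing_normalized n (basis_change_C n Q Qi C) P'"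
    and u: "u \<in> tens_carrier n" and f: "f \<in> coord_carrier n"
  shows "P' u f = P (tens_change n Q u) (coord_change n Q Qi f)"
proof -
  let ?C' = "basis_change_C n Q Qi C"
  have "P' u f = canonical_pairing n ?C' u f"
    using canonical_pairing_hopf_pairing[OF right_leibniz_basis_change[OF inv RL]] canonical_pairing_normalized
    by (intro normalized_hopf_pairing_unique[OF P' _ _ u f])
  also have "\<dots> = canonical_pairing n C (tens_change n Q u) (coord_change n Q Qi f)"
    by (rule canonical_pairing_basis_change[OF inv u f])
  also have "\<dots> = P (tens_change n Q u) (coord_change n Q Qi f)"
    by (rule normalized_hopf_pairing_unique[OF canonical_pairing_hopf_pairing[OF RL] canonical_pairing_normalized P
          tens_carrier_change coord_carrier_change[OF f]])
  finally show ?thesis .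
qed

theorem proposition3p4:
  fixes n :: nat and C :: "nat \<Rightarrow> nat \<Rightarrow> nat \<Rightarrow> 'k::field"
  assumes "right_leibniz n C"
  shows "(\<exists>P. hopf_pairing n C P \<and> pairing_normalized n C P)
       \<and> (\<forall>P P'. hopf_pairing n C P \<and> pairing_normalized n C P
                 \<and> hopf_pairing n C P' \<and> pairing_normalized n C P' \<longrightarrow>
                 (\<forall>u\<in>tens_carrier n. \<forall>f\<in>coord_carrier n. P u f = P' u f))
       \<and> (\<forall>Q Qi P P'. inverse_mats n Q Qi \<and>
             hopf_pairing n C P \<and> pairing_normalized n C P \<and>
             hopf_pairing n (basis_change_C n Q Qi C) P' \<and>
             pairing_normalized n (basis_change_C n Q Qi C) P' \<longrightarrow>
             (\<forall>u\<in>tens_carrier n. \<forall>f\<in>coord_carrier n.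
                 P' u f = P (tens_change n Q u) (coord_change n Q Qi f)))"
proof (intro conjI allI impI ballI)
  show "\<exists>P. hopf_pairing n C P \<and> pairing_normalized n C P"
    using canonical_pairing_hopf_pairing[OF assms] canonical_pairing_normalized by blast
next
  fix P P' :: "'k tens \<Rightarrow> 'k coord \<Rightarrow> 'k" and u :: "'k tens" and f :: "'k coord"
  assume "hopf_pairing n C P \<and> pairing_normalized n C P \<and> hopf_pairing n C P' \<and> pairing_normalized n C P'"
    and "u \<in> tens_carrier n" "f \<in> coord_carrier n"
  then show "P u f = P' u f" using normalized_hopf_pairing_unique by blast
next
  fix Q Qi :: "nat \<Rightarrow> nat \<Rightarrow> 'k" and P P' :: "'k tens \<Rightarrow> 'k coord \<Rightarrow> 'k"
    and u :: "'k tens" and f :: "'k coord"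
  assume "inverse_mats n Q Qi \<and> hopf_pairing n C P \<and> pairing_normalized n C P \<and>
      hopf_pairing n (basis_change_C n Q Qi C) P' \<and> pairing_normalized n (basis_change_C n Q Qi C) P'"
    and "u \<in> tens_carrier n" "f \<in> coord_carrier n"
  then show "P' u f = P (tens_change n Q u) (coord_change n Q Qi f)"
    using normalized_hopf_pairing_basis_change[OF assms] by blast
qed

end
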